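(* Let $0<\alpha<1$, $\lambda\ge0$, $v>0$, $D>0$, $T,L>0$, $r\ge1$, integers $n\ge1$, $K\ge2$, $h=L/K$, $x_i=ih$, $t_j=(j/n)^rT$, $\tau_j=t_{j+1}-t_j$, and $$a_{j,k}=\left( \frac{k^r-j^r}{(j+1)^r-j^r}\right)^{1-\alpha}-\left(\frac{k^r-(j+1)^r}{(j+1)^r-j^r}\right)^{1-\alpha}.$$ Let $y$ be the solution of $D_t^{\alpha}y=-v\,\partial_x y+D\,\partial_x^2 y+e^{\lambda t}f(x,t)$ on $(0,L)\times(0,T]$, $y(x,0)=g(x)$, $y(0,t)=y(L,t)=0$, and let $(Y_i^l)$ be the solution of the scheme $$\frac{1}{\Gamma(2-\alpha)}\sum_{j=0}^{l-1} \tau_{j}^{-\alpha}a_{j,l}\left(Y_i^{j+1}-Y_i^{j}\right)=-v \frac{Y_{i+1}^l-Y_{i-1}^l}{2h}+D\frac{Y_{i+1}^l-2Y_{i}^l+Y_{i-1}^l}{h^2}+e^{\lambda t_l}f(x_i,t_l),$$ $i=1,\ldots,K-1$, $l=1,\ldots,n$, with $Y_0^l=Y_K^l=0$, $Y_i^0=g(x_i)$. Let $\mathbf{e}^l=(y(x_1,t_l)-Y_1^l,\ldots,y(x_{K-1},t_l)-Y_{K-1}^l)^T$ and $\beta=-\min\{2-\alpha,r\alpha\}$. Then there exists a positive constant $C$ not depending on $n$ and $h$ such that $$\left\|\mathbf{e}^l\right\|_{\infty} \le C(n^{\beta}+h^2),\qquad l=1,\ldots,n.$$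
   Context: $D_t^\alpha$ denotes the Caputo derivative $D_t^\alpha y(t)=\frac{1}{\Gamma(1-\alpha)}\int_0^t (t-s)^{-\alpha}\partial_s y(s)\,ds$ in $t$; $f,g$ are continuous. Standing assumptions of the paper on the exact solution: $y$ has continuous partial derivatives up to fourth order in $x$, and there is $C>0$ with $\left|\partial_t^{\ell}y(x,t)\right|\le C(1+t^{\alpha-\ell})$ for $\ell=0,1,2$ and all $(x,t)\in[0,L]\times(0,T]$. $\|\cdot\|_\infty$ is the maximum norm over components. The solution of the tempered problem $\mathbb{D}_t^{\alpha,\lambda}u=-v\partial_xu+D\partial_x^2u+f$, $\mathbb{D}_t^{\alpha,\lambda}u=e^{-\lambda t}D_t^\alpha(e^{\lambda t}u)$, with the same initial/boundary data is $u=e^{-\lambda t}y$. *)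

theory Defs
  imports "HOL-Analysis.Analysis"
begin

definition caputo :: "real \<Rightarrow> (real \<Rightarrow> real) \<Rightarrow> real \<Rightarrow> real" where
  "caputo \<alpha> dy t = integral {0..t} (\<lambda>s. (t - s) powr (-\<alpha>) * dy s) / Gamma (1 - \<alpha>)"

definition tmesh :: "real \<Rightarrow> real \<Rightarrow> nat \<Rightarrow> nat \<Rightarrow> real" where
  "tmesh T r n j = (real j / real n) powr r * T"

definition tau :: "real \<Rightarrow> real \<Rightarrow> nat \<Rightarrow> nat \<Rightarrow> real" where
  "tau T r n j = tmesh T r n (Suc j) - tmesh T r n j"

definition acoef :: "real \<Rightarrow> real \<Rightarrow> nat \<Rightarrow> nat \<Rightarrow> real" where
  "acoef \<alpha> r j k =
     ((real k powr r - real j powr r) / (real (Suc j) powr r - real j powr r)) powr (1 - \<alpha>)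
   - ((real k powr r - real (Suc j) powr r) / (real (Suc j) powr r - real j powr r)) powr (1 - \<alpha>)"

definition is_scheme_solution ::
  "real \<Rightarrow> real \<Rightarrow> real \<Rightarrow> real \<Rightarrow> real \<Rightarrow> real \<Rightarrow> real \<Rightarrow>
   (real \<Rightarrow> real \<Rightarrow> real) \<Rightarrow> (real \<Rightarrow> real) \<Rightarrow> nat \<Rightarrow> nat \<Rightarrow> (nat \<Rightarrow> nat \<Rightarrow> real) \<Rightarrow> bool" where
  "is_scheme_solution \<alpha> lam v D T L r f g n K Y \<longleftrightarrow>
     (let h = L / real K in
       (\<forall>l\<in>{1..n}. Y 0 l = 0 \<and> Y K l = 0) \<and>
       (\<forall>i\<in>{0..K}. Y i 0 = g (real i * h)) \<and>
       (\<forall>i\<in>{1..K-1}. \<forall>l\<in>{1..n}.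
          (1 / Gamma (2 - \<alpha>)) * (\<Sum>j<l. tau T r n j powr (-\<alpha>) * acoef \<alpha> r j l * (Y i (Suc j) - Y i j))
          = - v * (Y (i+1) l - Y (i-1) l) / (2 * h)
            + D * (Y (i+1) l - 2 * Y i l + Y (i-1) l) / h^2
            + exp (lam * tmesh T r n l) * f (real i * h) (tmesh T r n l)))"

end

theory Submission
  imports Defs
begin

text \<open>The scheme weights are those of the L1 formula, which replaces the time derivative on each
  mesh interval by the difference quotient of the solution. Hence the error satisfies the
  scheme with a residual made of the L1 truncation error and the errors of the central
  differences in space. On the graded mesh the L1 truncation error at time t_l is
  O(n^(-gamma) t_l^(-alpha)) with gamma = min (2 - alpha) (r alpha), despite the singular
  behaviour y_t ~ t^(alpha - 1) and y_tt ~ t^(alpha - 2); the central differences contribute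
  O(h^2). The first L1 weight at level l dominates both t_l^(-alpha) / Gamma(1 - alpha) and
  T^(-alpha) / Gamma(1 - alpha), so the residual is at most that weight times some
  W = O(n^(-gamma) + h^2). As the L1 weights increase in j, a discrete comparison principle bounds
  by W every norm of the error that satisfies the energy inequality of the scheme. For
  v h <= 2 D the maximum norm does (discrete maximum principle); otherwise the Euclidean norm
  does, because the spatial operator is accretive, and there are fewer than L v / (2 D) grid
  points.\<close>

lemma powr_diff_mvt:
  fixes a b p :: real
  assumes "0 \<le> b" "b < a" "0 < p"
  shows "\<exists>z. b < z \<and> z < a \<and> a powr p - b powr p = (a - b) * (p * z powr (p - 1))"
proof -
  have c: "continuous_on {b..a} (\<lambda>u. u powr p)"
    by (rule continuous_on_powr') (use assms in \<open>auto intro!: continuous_intros\<close>)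
  have d: "\<And>x. b < x \<Longrightarrow> x < a \<Longrightarrow> (\<lambda>u. u powr p) differentiable (at x)"
    using has_real_derivative_powr assms real_differentiable_def
    by (metis le_less_trans)
  obtain l z where lz: "b < z" "z < a" "DERIV (\<lambda>u. u powr p) z :> l" "a powr p - b powr p = (a - b) * l"
    using MVT[OF assms(2) c d] by blast
  have "DERIV (\<lambda>u. u powr p) z :> p * z powr (p - 1)"
    using has_real_derivative_powr lz assms by (metis le_less_trans)
  then have "l = p * z powr (p - 1)" using lz(3) DERIV_unique by blast
  then show ?thesis using lz by blast
qed

lemma powr_diff_concave_lower:
  fixes a b p :: real
  assumes "0 < p" "p < 1" "0 \<le> b" "b \<le> a" "0 < a"
  shows "p * a powr (p - 1) * (a - b) \<le> a powr p - b powr p"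
proof (cases "b = a")
  case False
  then obtain z where z: "b < z" "z < a" "a powr p - b powr p = (a - b) * (p * z powr (p - 1))"
    using powr_diff_mvt[of b a p] assms by force
  have "a powr (p - 1) \<le> z powr (p - 1)"
    using powr_mono2'[of "p - 1" z a] assms z by auto
  then show ?thesis using z assms by (simp add: mult_left_mono mult.commute mult.left_commute)
qed simp

lemma powr_diff_concave_upper:
  fixes a b p :: real
  assumes "0 < p" "p < 1" "0 < b" "b \<le> a"
  shows "a powr p - b powr p \<le> p * b powr (p - 1) * (a - b)"
proof (cases "b = a")
  case False
  then obtain z where z: "b < z" "z < a" "a powr p - b powr p = (a - b) * (p * z powr (p - 1))"
    using powr_diff_mvt[of b a p] assms by force
  have "z powr (p - 1) \<le> b powr (p - 1)"
    using powr_mono2'[of "p - 1" b z] assms z by auto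
  then show ?thesis using z assms by (simp add: mult_left_mono mult.commute mult.left_commute)
qed simp

lemma powr_diff_convex_upper:
  fixes a b p :: real
  assumes "1 \<le> p" "0 \<le> b" "b \<le> a"
  shows "a powr p - b powr p \<le> p * a powr (p - 1) * (a - b)"
proof (cases "b = a")
  case False
  then obtain z where z: "b < z" "z < a" "a powr p - b powr p = (a - b) * (p * z powr (p - 1))"
    using powr_diff_mvt[of b a p] assms by force
  have "z powr (p - 1) \<le> a powr (p - 1)"
    using powr_mono2[of "p - 1" z a] assms z by auto
  then show ?thesis using z assms by (simp add: mult_left_mono mult.commute mult.left_commute)
qed simp

lemma powr_comparable_bound:
  fixes a b e :: real
  assumes "0 < a" "a / 2 \<le> b" "b \<le> a"
  shows "b powr e \<le> 2 powr \<bar>e\<bar> * a powr e"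
proof (cases "0 \<le> e")
  case True
  have "b powr e \<le> a powr e" using assms True by (intro powr_mono2) auto
  moreover have "1 \<le> (2::real) powr \<bar>e\<bar>" by (rule ge_one_powr_ge_zero) auto
  ultimately show ?thesis by (metis mult_1 mult_right_mono order_trans powr_ge_zero)
next
  case False
  have "b powr e \<le> (a / 2) powr e" using assms False by (intro powr_mono2') auto
  also have "\<dots> = 2 powr (- e) * a powr e" using assms by (simp add: powr_divide powr_minus_divide)
  finally show ?thesis using False by simp
qed

lemma powr_grading_bound:
  fixes N x a b :: real
  assumes "1 \<le> N" "0 < x" "x \<le> 1" "1 \<le> N * x"
  shows "N powr (- b) * x powr (a - b) \<le> N powr (- min a b)"
proof (cases "b \<le> a")
  case True
  have "x powr (a - b) \<le> 1" using assms True by (intro powr_le1) auto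
  then have "N powr (- b) * x powr (a - b) \<le> N powr (- b)" by (simp add: mult_left_le)
  then show ?thesis using True by (simp add: min_def)
next
  case False
  have x1: "1 / N \<le> x" using assms by (simp add: field_simps)
  have "x powr (a - b) \<le> (1 / N) powr (a - b)" using False assms x1 by (intro powr_mono2') auto
  also have "\<dots> = N powr (b - a)" using assms by (simp add: powr_divide powr_minus_divide[symmetric])
  finally have "N powr (- b) * x powr (a - b) \<le> N powr (- b) * N powr (b - a)"
    by (simp add: mult_left_mono)
  also have "\<dots> = N powr (- a)" by (simp add: powr_add[symmetric])
  finally show ?thesis using False by (simp add: min_def)
qed

lemma powr_cancel_identities:
  fixes q a :: real assumes q: "0 < q"
  shows "q powr (1 - a) * (q / 2) powr (a - 1) = 2 powr (1 - a)"
    and "(q / 2) powr (- a) * q powr a = 2 powr a"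
    and "q powr (1 - a) * q powr a = q"
proof -
  have e: "q powr (1 - a) * q powr (a - 1) = 1"
    using q by (simp add: powr_add[symmetric])
  have "(q / 2) powr (a - 1) = q powr (a - 1) / 2 powr (a - 1)" using q by (simp add: powr_divide)
  moreover have "1 / 2 powr (a - 1) = (2::real) powr (1 - a)"
    by (simp add: powr_minus_divide[symmetric] )
  ultimately show "q powr (1 - a) * (q / 2) powr (a - 1) = 2 powr (1 - a)"
    using e by (metis (no_types, lifting) times_divide_eq_right)
  have "(q / 2) powr (- a) = q powr (- a) / 2 powr (- a)" using q by (simp add: powr_divide)
  moreover have "q powr (- a) * q powr a = 1" using q by (simp add: powr_add[symmetric])
  moreover have "1 / 2 powr (- a) = (2::real) powr a" by (simp add: powr_minus_divide)
  ultimately show "(q / 2) powr (- a) * q powr a = 2 powr a"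
    by (metis (no_types, lifting) mult.commute times_divide_eq_left)
  show "q powr (1 - a) * q powr a = q" using q by (simp add: powr_add[symmetric])
qed

lemma Gamma_2_minus:
  fixes \<alpha> :: real assumes "\<alpha> < 1"
  shows "Gamma (2 - \<alpha>) = (1 - \<alpha>) * Gamma (1 - \<alpha>)"
proof -
  have "(1 - \<alpha>) \<notin> \<int>\<^sub>\<le>\<^sub>0" using assms by (auto elim!: nonpos_Ints_cases)
  from Gamma_plus1[OF this] show ?thesis by (simp add: algebra_simps)
qed

lemma has_integral_powr_kernel:
  fixes a b t \<alpha> :: real
  assumes "a \<le> b" "b \<le> t" "0 < \<alpha>" "\<alpha> < 1"
  shows "((\<lambda>s. (t - s) powr (- \<alpha>)) has_integral
           ((t - a) powr (1 - \<alpha>) - (t - b) powr (1 - \<alpha>)) / (1 - \<alpha>)) {a..b}"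
proof -
  define F where "F s = - ((t - s) powr (1 - \<alpha>)) / (1 - \<alpha>)" for s
  have c: "continuous_on {a..b} F"
    unfolding F_def using assms
    by (intro continuous_intros continuous_on_powr') auto
  have d: "(F has_vector_derivative (t - x) powr (- \<alpha>)) (at x)" if "x \<in> {a<..<b}" for x
  proof -
    have pos: "0 < t - x" using that assms by auto
    have "((\<lambda>s. (t - s) powr (1 - \<alpha>)) has_real_derivative
            ((1 - \<alpha>) * (t - x) powr (1 - \<alpha> - 1)) * (-1)) (at x)"
      by (rule DERIV_chain2[where f = "\<lambda>u. u powr (1 - \<alpha>)"])
         (use pos has_real_derivative_powr in \<open>auto intro!: derivative_eq_intros\<close>)
    then have "(F has_real_derivative (t - x) powr (- \<alpha>)) (at x)"
      unfolding F_def using assms pos by (auto intro!: derivative_eq_intros)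
    then show ?thesis by (simp add: has_real_derivative_iff_has_vector_derivative)
  qed
  have "((\<lambda>s. (t - s) powr (- \<alpha>)) has_integral (F b - F a)) {a..b}"
    by (rule fundamental_theorem_of_calculus_interior[OF assms(1) c d])
  moreover have "F b - F a = ((t - a) powr (1 - \<alpha>) - (t - b) powr (1 - \<alpha>)) / (1 - \<alpha>)"
    unfolding F_def by (simp add: diff_divide_distrib)
  ultimately show ?thesis by simp
qed

lemma has_integral_powr_Icc:
  fixes a b \<alpha> :: real
  assumes "0 \<le> a" "a \<le> b" "0 < \<alpha>"
  shows "((\<lambda>s. s powr (\<alpha> - 1)) has_integral (b powr \<alpha> - a powr \<alpha>) / \<alpha>) {a..b}"
proof -
  define F where "F s = s powr \<alpha> / \<alpha>" for s
  have c: "continuous_on {a..b} F"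
    unfolding F_def using assms
    by (intro continuous_intros continuous_on_powr') auto
  have d: "(F has_vector_derivative x powr (\<alpha> - 1)) (at x)" if "x \<in> {a<..<b}" for x
  proof -
    have pos: "0 < x" using that assms by auto
    have "(F has_real_derivative x powr (\<alpha> - 1)) (at x)"
      unfolding F_def using assms pos has_real_derivative_powr[OF pos, of \<alpha>]
      by (auto intro!: derivative_eq_intros)
    then show ?thesis by (simp add: has_real_derivative_iff_has_vector_derivative)
  qed
  have "((\<lambda>s. s powr (\<alpha> - 1)) has_integral (F b - F a)) {a..b}"
    by (rule fundamental_theorem_of_calculus_interior[OF assms(2) c d])
  then show ?thesis unfolding F_def by (simp add: diff_divide_distrib)
qed

lemma derivative_bound_Icc:
  fixes \<phi> \<phi>' :: "real \<Rightarrow> real"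
  assumes d: "\<And>u. u \<in> {a..b} \<Longrightarrow> (\<phi> has_real_derivative \<phi>' u) (at u within {a..b})"
    and bd: "\<And>u. u \<in> {a..b} \<Longrightarrow> \<bar>\<phi>' u\<bar> \<le> B"
    and xy: "x \<in> {a..b}" "y \<in> {a..b}"
  shows "\<bar>\<phi> x - \<phi> y\<bar> \<le> B * \<bar>x - y\<bar>"
  using field_differentiable_bound[of "{a..b}" \<phi> \<phi>' B x y] assms by auto

lemma integral_split_at_mesh:
  fixes f :: "real \<Rightarrow> real" and t :: "nat \<Rightarrow> real"
  assumes mono: "\<And>i j. i \<le> j \<Longrightarrow> t i \<le> t j" and t0: "t 0 = 0"
    and int: "f integrable_on {0..t l}"
  shows "m \<le> l \<Longrightarrow> integral {0..t m} f = (\<Sum>j<m. integral {t j..t (Suc j)} f)"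
proof (induction m)
  case 0 then show ?case using t0 by simp
next
  case (Suc m)
  have i: "f integrable_on {0..t (Suc m)}"
    using integrable_subinterval_real[OF int] mono[of "Suc m" l] Suc.prems by auto
  have "integral {0..t (Suc m)} f = integral {0..t m} f + integral {t m..t (Suc m)} f"
    using Henstock_Kurzweil_Integration.integral_combine[where a = 0 and c = "t m" and b = "t (Suc m)" and f = f] i mono[of 0 m] mono[of m "Suc m"] t0
      by auto
  then show ?case using Suc by simp
qed

section \<open>The graded mesh and the L1 weights\<close>

locale graded_mesh =
  fixes T r :: real and n :: nat
  assumes T_pos: "0 < T" and r_ge: "1 \<le> r" and n_ge: "1 \<le> n"
begin

abbreviation "tm \<equiv> tmesh T r n"
abbreviation "\<tau> \<equiv> tau T r n"

lemma tm_eq: "tm j = T * real j powr r / real n powr r"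
  unfolding tmesh_def by (simp add: powr_divide)

lemma tm_x: "tm j = (real j / real n) powr r * T" unfolding tmesh_def by simp

lemma tm_powr: "tm j powr p = (real j / real n) powr (r * p) * T powr p"
  unfolding tm_x using T_pos by (simp add: powr_mult powr_powr)

lemma tm_0[simp]: "tm 0 = 0"
  unfolding tmesh_def using r_ge by simp

lemma n_pos: "0 < real n" using n_ge by simp

lemma tm_nonneg: "0 \<le> tm j"
  unfolding tmesh_def using T_pos by simp

lemma tm_less: "i < j \<Longrightarrow> tm i < tm j"
  unfolding tm_eq using T_pos n_pos r_ge
  by (auto intro!: divide_strict_right_mono mult_strict_left_mono powr_less_mono2)

lemma tm_mono: "i \<le> j \<Longrightarrow> tm i \<le> tm j"
  using tm_less[of i j] by (cases "i = j") auto

lemma tm_pos: "0 < j \<Longrightarrow> 0 < tm j"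
  using tm_less[of 0 j] by simp

lemma tm_n: "tm n = T"
  unfolding tmesh_def using n_pos by simp

lemma tm_le_T: "j \<le> n \<Longrightarrow> tm j \<le> T"
  using tm_mono tm_n by metis

lemma tau_pos: "0 < \<tau> j"
  unfolding tau_def using tm_less by simp

lemma tau_eq: "\<tau> j = T * (real (Suc j) powr r - real j powr r) / real n powr r"
  unfolding tau_def tm_eq by (simp add: diff_divide_distrib right_diff_distrib)

lemma tau_upper: "\<tau> j \<le> r * T * real (Suc j) powr (r - 1) / real n powr r"
proof -
  have "real (Suc j) powr r - real j powr r \<le> r * real (Suc j) powr (r - 1) * (real (Suc j) - real j)"
    by (rule powr_diff_convex_upper) (use r_ge in auto)
  then show ?thesis unfolding tau_eq using T_pos n_pos
    by (simp add: divide_right_mono mult.commute mult.left_commute)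
qed

lemma tau_prev_lower:
  assumes "1 \<le> l"
  shows "T * real l powr (r - 1) / real n powr r \<le> \<tau> (l - 1)"
proof -
  have l: "real l = real (l - 1) + 1" using assms by simp
  have "real (l - 1) powr (r - 1) \<le> real l powr (r - 1)"
    by (rule powr_mono2) (use r_ge in auto)
  then have "real (l - 1) * real (l - 1) powr (r - 1) \<le> real (l - 1) * real l powr (r - 1)"
    by (simp add: mult_left_mono)
  moreover have "real (l - 1) powr r = real (l - 1) * real (l - 1) powr (r - 1)"
    using r_ge by (cases "l - 1 = 0") (auto simp: powr_mult_base)
  moreover have "real l powr r = real l * real l powr (r - 1)"
    using assms by (simp add: powr_mult_base)
  ultimately have "real l powr (r - 1) \<le> real l powr r - real (l - 1) powr r"
    by (simp add: l algebra_simps)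
  then show ?thesis
    unfolding tau_eq using assms T_pos n_pos
    by (simp add: divide_right_mono)
qed

definition l1_weight :: "real \<Rightarrow> nat \<Rightarrow> nat \<Rightarrow> real" where
  "l1_weight \<alpha> l j = ((tm l - tm j) powr (1 - \<alpha>) - (tm l - tm (Suc j)) powr (1 - \<alpha>)) / (\<tau> j * Gamma (2 - \<alpha>))"

lemma l1_weight_eq_scheme_coeff:
  assumes "j < l" "\<alpha> < 1"
  shows "\<tau> j powr (- \<alpha>) * acoef \<alpha> r j l / Gamma (2 - \<alpha>) = l1_weight \<alpha> l j"
proof -
  let ?c = "T / real n powr r"
  have c: "0 < ?c" using T_pos n_pos by simp
  have dj: "real (Suc j) powr r - real j powr r > 0"
    using tau_pos[of j] T_pos n_pos unfolding tau_eq by (simp add: zero_less_divide_iff zero_less_mult_iff)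
  have e1: "(real l powr r - real j powr r) / (real (Suc j) powr r - real j powr r) = (tm l - tm j) / \<tau> j"
    unfolding tau_eq tm_eq using c dj T_pos n_pos by (simp add: field_simps)
  have e2: "(real l powr r - real (Suc j) powr r) / (real (Suc j) powr r - real j powr r) = (tm l - tm (Suc j)) / \<tau> j"
    unfolding tau_eq tm_eq using c dj T_pos n_pos by (simp add: field_simps)
  have A: "0 \<le> tm l - tm j" "0 \<le> tm l - tm (Suc j)" using tm_mono assms by auto
  have tp: "0 < \<tau> j" by (rule tau_pos)
  have "\<tau> j powr (- \<alpha>) * acoef \<alpha> r j l
     = \<tau> j powr (- \<alpha>) * (((tm l - tm j) powr (1 - \<alpha>) - (tm l - tm (Suc j)) powr (1 - \<alpha>)) / \<tau> j powr (1 - \<alpha>))"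
  proof -
    have "((tm l - tm j) / \<tau> j) powr (1 - \<alpha>) = (tm l - tm j) powr (1 - \<alpha>) / \<tau> j powr (1 - \<alpha>)"
      "((tm l - tm (Suc j)) / \<tau> j) powr (1 - \<alpha>) = (tm l - tm (Suc j)) powr (1 - \<alpha>) / \<tau> j powr (1 - \<alpha>)"
      using A tp by (auto intro!: powr_divide)
    then show ?thesis unfolding acoef_def e1 e2 by (simp add: diff_divide_distrib)
  qed
  also have "\<dots> = ((tm l - tm j) powr (1 - \<alpha>) - (tm l - tm (Suc j)) powr (1 - \<alpha>)) / \<tau> j"
  proof -
    have "\<tau> j powr (- \<alpha>) / \<tau> j powr (1 - \<alpha>) = 1 / \<tau> j"
    proof -
      have "\<tau> j powr (- \<alpha>) / \<tau> j powr (1 - \<alpha>) = \<tau> j powr (- \<alpha> - (1 - \<alpha>))"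
        by (rule powr_diff[symmetric])
      also have "- \<alpha> - (1 - \<alpha>) = -1" by simp
      finally show ?thesis using tp by (simp add: powr_minus_divide)
    qed
    moreover have "\<And>X. \<tau> j powr (- \<alpha>) * (X / \<tau> j powr (1 - \<alpha>)) = X * (\<tau> j powr (- \<alpha>) / \<tau> j powr (1 - \<alpha>))"
      by (simp add: ac_simps)
    ultimately show ?thesis by simp
  qed
  finally show ?thesis unfolding l1_weight_def by simp
qed

lemma l1_weight_alt:
  assumes "\<alpha> < 1"
  shows "l1_weight \<alpha> l j = ((tm l - tm j) powr (1 - \<alpha>) - (tm l - tm (Suc j)) powr (1 - \<alpha>)) / (1 - \<alpha>) / \<tau> j / Gamma (1 - \<alpha>)"
  unfolding l1_weight_def Gamma_2_minus[OF assms] by (simp add: field_simps)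

lemma l1_weight_lower:
  assumes "0 < \<alpha>" "\<alpha> < 1" "j < l"
  shows "(tm l - tm j) powr (- \<alpha>) / Gamma (1 - \<alpha>) \<le> l1_weight \<alpha> l j"
proof -
  have a: "0 < tm l - tm j" using tm_less assms by simp
  have b: "0 \<le> tm l - tm (Suc j)" "tm l - tm (Suc j) \<le> tm l - tm j" using tm_mono assms by auto
  have "(1 - \<alpha>) * (tm l - tm j) powr (1 - \<alpha> - 1) * ((tm l - tm j) - (tm l - tm (Suc j)))
      \<le> (tm l - tm j) powr (1 - \<alpha>) - (tm l - tm (Suc j)) powr (1 - \<alpha>)"
    by (rule powr_diff_concave_lower) (use assms a b in auto)
  then have "(1 - \<alpha>) * (tm l - tm j) powr (- \<alpha>) * \<tau> j
      \<le> (tm l - tm j) powr (1 - \<alpha>) - (tm l - tm (Suc j)) powr (1 - \<alpha>)"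
    unfolding tau_def by simp
  then have "(tm l - tm j) powr (- \<alpha>) \<le> ((tm l - tm j) powr (1 - \<alpha>) - (tm l - tm (Suc j)) powr (1 - \<alpha>)) / (1 - \<alpha>) / \<tau> j"
    using tau_pos[of j] assms by (simp add: field_simps)
  moreover have G: "0 < Gamma (1 - \<alpha>)" using assms by simp
  ultimately show ?thesis unfolding l1_weight_alt[OF assms(2)]
    by (metis divide_right_mono less_eq_real_def)
qed

lemma l1_weight_upper:
  assumes "0 < \<alpha>" "\<alpha> < 1" "Suc j < l"
  shows "l1_weight \<alpha> l j \<le> (tm l - tm (Suc j)) powr (- \<alpha>) / Gamma (1 - \<alpha>)"
proof -
  have b: "0 < tm l - tm (Suc j)" "tm l - tm (Suc j) \<le> tm l - tm j" using tm_less tm_mono assms by auto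
  have "(tm l - tm j) powr (1 - \<alpha>) - (tm l - tm (Suc j)) powr (1 - \<alpha>)
      \<le> (1 - \<alpha>) * (tm l - tm (Suc j)) powr (1 - \<alpha> - 1) * ((tm l - tm j) - (tm l - tm (Suc j)))"
    by (rule powr_diff_concave_upper) (use assms b in auto)
  then have "(tm l - tm j) powr (1 - \<alpha>) - (tm l - tm (Suc j)) powr (1 - \<alpha>)
      \<le> (1 - \<alpha>) * (tm l - tm (Suc j)) powr (- \<alpha>) * \<tau> j"
    unfolding tau_def by simp
  then have "((tm l - tm j) powr (1 - \<alpha>) - (tm l - tm (Suc j)) powr (1 - \<alpha>)) / (1 - \<alpha>) / \<tau> j \<le> (tm l - tm (Suc j)) powr (- \<alpha>)"
    using tau_pos[of j] assms by (simp add: field_simps)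
  moreover have G: "0 < Gamma (1 - \<alpha>)" using assms by simp
  ultimately show ?thesis unfolding l1_weight_alt[OF assms(2)]
    by (metis divide_right_mono less_eq_real_def)
qed

lemma l1_weight_mono:
  assumes "0 < \<alpha>" "\<alpha> < 1" "Suc j < l"
  shows "l1_weight \<alpha> l j \<le> l1_weight \<alpha> l (Suc j)"
  using l1_weight_upper[OF assms] l1_weight_lower[OF assms(1,2), of "Suc j" l] assms by simp

lemma l1_weight_pos:
  assumes "0 < \<alpha>" "\<alpha> < 1" "j < l"
  shows "0 < l1_weight \<alpha> l j"
proof -
  have "0 < tm l - tm j" using tm_less assms by simp
  then have "0 < (tm l - tm j) powr (- \<alpha>) / Gamma (1 - \<alpha>)"
    using Gamma_real_pos[of "1 - \<alpha>"] assms by simp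
  then show ?thesis using l1_weight_lower[OF assms] by linarith
qed

lemma l1_weight_first_lower:
  assumes "0 < \<alpha>" "\<alpha> < 1" "1 \<le> l" "l \<le> n"
  shows "T powr (- \<alpha>) / Gamma (1 - \<alpha>) \<le> l1_weight \<alpha> l 0"
proof -
  have "T powr (- \<alpha>) \<le> tm l powr (- \<alpha>)"
    using powr_mono2'[of "- \<alpha>" "tm l" T] tm_pos[of l] tm_le_T[of l] assms by simp
  then have "T powr (- \<alpha>) / Gamma (1 - \<alpha>) \<le> tm l powr (- \<alpha>) / Gamma (1 - \<alpha>)"
    using Gamma_real_pos[of "1 - \<alpha>"] assms by (simp add: divide_right_mono)
  then show ?thesis using l1_weight_lower[OF assms(1,2), of 0 l] assms by simp
qed

lemma has_integral_kernel_l1_weight: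
  assumes "0 < \<alpha>" "\<alpha> < 1" "j < l"
  shows "((\<lambda>s. (tm l - s) powr (- \<alpha>)) has_integral (l1_weight \<alpha> l j * \<tau> j * Gamma (1 - \<alpha>))) {tm j..tm (Suc j)}"
proof -
  have "((\<lambda>s. (tm l - s) powr (- \<alpha>)) has_integral
           ((tm l - tm j) powr (1 - \<alpha>) - (tm l - tm (Suc j)) powr (1 - \<alpha>)) / (1 - \<alpha>)) {tm j..tm (Suc j)}"
    by (rule has_integral_powr_kernel) (use assms tm_mono in auto)
  moreover have "l1_weight \<alpha> l j * \<tau> j * Gamma (1 - \<alpha>) = ((tm l - tm j) powr (1 - \<alpha>) - (tm l - tm (Suc j)) powr (1 - \<alpha>)) / (1 - \<alpha>)"
  proof -
    have G: "0 < Gamma (1 - \<alpha>)" using assms by simp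
    then show ?thesis unfolding l1_weight_alt[OF assms(2)] using tau_pos[of j] by simp
  qed
  ultimately show ?thesis by simp
qed

end

section \<open>Summation by parts and a discrete comparison principle\<close>

lemma sum_weighted_diffs_by_parts:
  fixes b e :: "nat \<Rightarrow> 'a::comm_ring"
  assumes "1 \<le> m"
  shows "(\<Sum>j<m. b j * (e (Suc j) - e j))
         = b (m - 1) * e m - (\<Sum>j\<in>{1..<m}. (b j - b (j - 1)) * e j) - b 0 * e 0"
  using assms
proof (induction m)
  case 0 then show ?case by simp
next
  case (Suc m)
  show ?case
  proof (cases "m = 0")
    case True then show ?thesis by (simp add: algebra_simps)
  next
    case False
    then have IH: "(\<Sum>j<m. b j * (e (Suc j) - e j))
         = b (m - 1) * e m - (\<Sum>j\<in>{1..<m}. (b j - b (j - 1)) * e j) - b 0 * e 0"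
      using Suc by simp
    have "{1..<Suc m} = insert m {1..<m}" using False by auto
    then have "(\<Sum>j\<in>{1..<Suc m}. (b j - b (j - 1)) * e j) = (b m - b (m - 1)) * e m + (\<Sum>j\<in>{1..<m}. (b j - b (j - 1)) * e j)"
      by simp
    then show ?thesis using IH by (simp add: algebra_simps)
  qed
qed

lemma sum_weighted_diffs_by_parts_scaled:
  fixes b e :: "nat \<Rightarrow> 'a::comm_ring"
  assumes "1 \<le> m" "e 0 = 0"
  shows "c * (\<Sum>j<m. b j * (e (Suc j) - e j))
         = b (m - 1) * (c * e m) - (\<Sum>j\<in>{1..<m}. (b j - b (j - 1)) * (c * e j))"
proof -
  have "c * (\<Sum>j<m. b j * (e (Suc j) - e j)) = (\<Sum>j<m. b j * (c * e (Suc j) - c * e j))"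
    by (simp add: sum_distrib_left algebra_simps)
  also have "\<dots> = b (m - 1) * (c * e m) - (\<Sum>j\<in>{1..<m}. (b j - b (j - 1)) * (c * e j))"
    using sum_weighted_diffs_by_parts[OF assms(1), of b "\<lambda>j. c * e j"] assms(2) by simp
  finally show ?thesis .
qed

lemma sum_backward_diff_telescope:
  fixes f :: "nat \<Rightarrow> 'a::ab_group_add"
  assumes "1 \<le> m"
  shows "(\<Sum>j\<in>{1..<m}. f j - f (j - 1)) = f (m - 1) - f 0"
  using assms
proof (induction m)
  case 0 then show ?case by simp
next
  case (Suc m)
  show ?case
  proof (cases "m = 0")
    case True then show ?thesis by simp
  next
    case False
    have "{1..<Suc m} = insert m {1..<m}" using False by auto
    then show ?thesis using Suc False by simp
  qed
qed

lemma l1_discrete_comparison: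
  fixes b :: "nat \<Rightarrow> nat \<Rightarrow> real" and E P :: "nat \<Rightarrow> real" and W :: real
  assumes mono: "\<And>l j. 1 \<le> l \<Longrightarrow> l \<le> n \<Longrightarrow> Suc j < l \<Longrightarrow> b l j \<le> b l (Suc j)"
    and pos: "\<And>l. 1 \<le> l \<Longrightarrow> l \<le> n \<Longrightarrow> 0 < b l (l - 1)"
    and ineq: "\<And>l. 1 \<le> l \<Longrightarrow> l \<le> n \<Longrightarrow>
        b l (l - 1) * E l \<le> (\<Sum>j\<in>{1..<l}. (b l j - b l (j - 1)) * E j) + P l"
    and Pb: "\<And>l. 1 \<le> l \<Longrightarrow> l \<le> n \<Longrightarrow> P l \<le> b l 0 * W"
  shows "1 \<le> l \<Longrightarrow> l \<le> n \<Longrightarrow> E l \<le> W"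
proof (induction l rule: less_induct)
  case (less l)
  have "(\<Sum>j\<in>{1..<l}. (b l j - b l (j - 1)) * E j) \<le> (\<Sum>j\<in>{1..<l}. (b l j - b l (j - 1)) * W)"
  proof (rule sum_mono)
    fix j assume j: "j \<in> {1..<l}"
    have "b l (j - 1) \<le> b l j" using mono[of l "j - 1"] j less.prems by auto
    moreover have "E j \<le> W" using less.IH[of j] j less.prems by auto
    ultimately show "(b l j - b l (j - 1)) * E j \<le> (b l j - b l (j - 1)) * W"
      by (simp add: mult_left_mono)
  qed
  also have "\<dots> = (b l (l - 1) - b l 0) * W"
    using sum_backward_diff_telescope[of l "\<lambda>j. b l j"] less.prems
      by (simp add: sum_distrib_right[symmetric])
  finally have "b l (l - 1) * E l \<le> (b l (l - 1) - b l 0) * W + b l 0 * W"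
    using ineq[of l] Pb[of l] less.prems by linarith
  then have "b l (l - 1) * E l \<le> b l (l - 1) * W" by (simp add: algebra_simps)
  then show ?case using pos[of l] less.prems by simp
qed

section \<open>Stability of the scheme\<close>

lemma sum_central_diff_product:
  fixes e :: "nat \<Rightarrow> 'a::comm_ring"
  assumes "1 \<le> m"
  shows "(\<Sum>i\<in>{1..<m}. e i * (e (Suc i) - e (i - 1))) = e (m - 1) * e m - e 0 * e 1"
  using assms
proof (induction m)
  case 0 then show ?case by simp
next
  case (Suc m)
  show ?case
  proof (cases "m = 0")
    case True then show ?thesis by simp
  next
    case False
    have "{1..<Suc m} = insert m {1..<m}" using False by auto
    then show ?thesis using Suc False by (simp add: algebra_simps)
  qed
qed

lemma sum_second_diff_product:
  fixes e :: "nat \<Rightarrow> 'a::comm_ring_1"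
  assumes "1 \<le> m"
  shows "(\<Sum>i\<in>{1..<m}. e i * (2 * e i - e (Suc i) - e (i - 1)))
     = (\<Sum>i<m. (e (Suc i) - e i)^2) - (e m)^2 - (e 0)^2 + e (m - 1) * e m + e 0 * e 1"
  using assms
proof (induction m)
  case 0 then show ?case by simp
next
  case (Suc m)
  show ?case
  proof (cases "m = 0")
    case True then show ?thesis by (simp add: power2_eq_square algebra_simps)
  next
    case False
    have "{1..<Suc m} = insert m {1..<m}" using False by auto
    then show ?thesis using Suc False by (simp add: power2_eq_square algebra_simps)
  qed
qed

lemma convection_diffusion_accretive:
  fixes e :: "nat \<Rightarrow> real" and v D h :: real
  assumes "1 \<le> K" "e 0 = 0" "e K = 0" "0 < h" "0 \<le> D"
  shows "0 \<le> (\<Sum>i\<in>{1..<K}. e i * (v * (e (i + 1) - e (i - 1)) / (2 * h)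
                       - D * (e (i + 1) - 2 * e i + e (i - 1)) / h^2))"
proof -
  have s: "(\<Sum>i\<in>{1..<K}. e i * (v * (e (i + 1) - e (i - 1)) / (2 * h)
                       - D * (e (i + 1) - 2 * e i + e (i - 1)) / h^2))
     = v / (2 * h) * (\<Sum>i\<in>{1..<K}. e i * (e (Suc i) - e (i - 1)))
       + D / h^2 * (\<Sum>i\<in>{1..<K}. e i * (2 * e i - e (Suc i) - e (i - 1)))"
    by (simp add: sum_distrib_left sum.distrib[symmetric] algebra_simps diff_divide_distrib add_divide_distrib)
  have "(\<Sum>i\<in>{1..<K}. e i * (e (Suc i) - e (i - 1))) = 0"
    using sum_central_diff_product[OF assms(1), of e] assms by simp
  moreover have "0 \<le> (\<Sum>i\<in>{1..<K}. e i * (2 * e i - e (Suc i) - e (i - 1)))"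
    using sum_second_diff_product[OF assms(1), of e] assms by (simp add: sum_nonneg)
  ultimately show ?thesis unfolding s using assms by simp
qed

lemma stencil_nonpos_at_max:
  fixes v D h ep em e0 :: real
  assumes "0 < h" "0 < D" "0 < v" "v * h \<le> 2 * D" "ep \<le> e0" "em \<le> e0"
  shows "- v * (ep - em) / (2 * h) + D * (ep - 2 * e0 + em) / h^2 \<le> 0"
proof -
  have a: "(2 * D - v * h) * ep \<le> (2 * D - v * h) * e0" using assms by (intro mult_left_mono) auto
  have b: "(2 * D + v * h) * em \<le> (2 * D + v * h) * e0" using assms by (intro mult_left_mono) auto
  have "- v * (ep - em) / (2 * h) + D * (ep - 2 * e0 + em) / h^2
      = ((2 * D - v * h) * ep + (2 * D + v * h) * em - 4 * D * e0) / (2 * h^2)"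
    using assms by (simp add: field_simps power2_eq_square)
  also have "\<dots> \<le> 0" using a b assms by (intro divide_nonpos_pos) (auto simp: algebra_simps)
  finally show ?thesis .
qed

lemma stencil_sgn_nonpos_at_abs_max:
  fixes w :: "nat \<Rightarrow> real" and v D h :: real
  assumes h: "0 < h" "0 < D" "0 < v" "v * h \<le> 2 * D"
    and bd: "w 0 = 0" "w K = 0" and i0: "i0 \<in> {1..K-1}"
    and max: "\<And>i. i \<in> {1..K-1} \<Longrightarrow> \<bar>w i\<bar> \<le> \<bar>w i0\<bar>"
  shows "sgn (w i0) * (- v * (w (i0+1) - w (i0-1)) / (2*h) + D * (w (i0+1) - 2 * w i0 + w (i0-1)) / h^2) \<le> 0"
proof -
  let ?\<sigma> = "sgn (w i0)"
  have below: "?\<sigma> * w i \<le> ?\<sigma> * w i0" if "i \<le> K" for i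
  proof -
    have "\<bar>w i\<bar> \<le> \<bar>w i0\<bar>" using max[of i] bd that by (cases "i = 0 \<or> i = K") auto
    then show ?thesis by (auto simp: sgn_if)
  qed
  have "- v * (?\<sigma> * w (i0+1) - ?\<sigma> * w (i0-1)) / (2*h)
        + D * (?\<sigma> * w (i0+1) - 2 * (?\<sigma> * w i0) + ?\<sigma> * w (i0-1)) / h^2 \<le> 0"
    using stencil_nonpos_at_max[OF h] below[of "i0+1"] below[of "i0-1"] i0 by auto
  then show ?thesis by (simp add: algebra_simps add_divide_distrib diff_divide_distrib)
qed

lemma max_norm_stability:
  fixes e :: "nat \<Rightarrow> nat \<Rightarrow> real" and b \<rho> :: "nat \<Rightarrow> real" and v D h :: real and K l :: nat
  assumes K: "2 \<le> K" and h: "0 < h" "0 < D" "0 < v" "v * h \<le> 2 * D"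
    and l: "1 \<le> l"
    and mono: "\<And>j. Suc j < l \<Longrightarrow> b j \<le> b (Suc j)"
    and e0: "\<And>i. i \<in> {1..K-1} \<Longrightarrow> e i 0 = 0"
    and bd: "e 0 l = 0" "e K l = 0"
    and eq: "\<And>i. i \<in> {1..K-1} \<Longrightarrow> (\<Sum>j<l. b j * (e i (Suc j) - e i j))
        = - v * (e (i+1) l - e (i-1) l) / (2*h) + D * (e (i+1) l - 2 * e i l + e (i-1) l) / h^2 + \<rho> i"
  shows "b (l - 1) * Max ((\<lambda>i. \<bar>e i l\<bar>) ` {1..K-1})
     \<le> (\<Sum>j\<in>{1..<l}. (b j - b (j - 1)) * Max ((\<lambda>i. \<bar>e i j\<bar>) ` {1..K-1}))
       + Max ((\<lambda>i. \<bar>\<rho> i\<bar>) ` {1..K-1})"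
proof -
  define E where "E j = Max ((\<lambda>i. \<bar>e i j\<bar>) ` {1..K-1})" for j
  have E_ge: "\<bar>e i j\<bar> \<le> E j" if "i \<in> {1..K-1}" for i j
    unfolding E_def using that by (intro Max_ge) auto
  have "E l \<in> (\<lambda>i. \<bar>e i l\<bar>) ` {1..K-1}"
    unfolding E_def using K by (intro Max_in) auto
  then obtain i0 where i0: "i0 \<in> {1..K-1}" "\<bar>e i0 l\<bar> = E l" by force
  let ?\<sigma> = "sgn (e i0 l)"
  have \<sigma>_le_abs: "?\<sigma> * x \<le> \<bar>x\<bar>" for x by (auto simp: sgn_if)
  have "?\<sigma> * (\<Sum>j<l. b j * (e i0 (Suc j) - e i0 j))
      = b (l - 1) * E l - (\<Sum>j\<in>{1..<l}. (b j - b (j - 1)) * (?\<sigma> * e i0 j))"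
  proof -
    have "?\<sigma> * e i0 l = E l" using i0(2) by (auto simp: sgn_if)
    then show ?thesis
      using sum_weighted_diffs_by_parts_scaled[where e = "e i0" and c = ?\<sigma> and b = b, OF l e0[OF i0(1)]]
      by simp
  qed
  moreover have "(\<Sum>j\<in>{1..<l}. (b j - b (j - 1)) * (?\<sigma> * e i0 j)) \<le> (\<Sum>j\<in>{1..<l}. (b j - b (j - 1)) * E j)"
  proof (rule sum_mono)
    fix j assume j: "j \<in> {1..<l}"
    have "?\<sigma> * e i0 j \<le> E j" using \<sigma>_le_abs E_ge[OF i0(1)] order_trans by blast
    then show "(b j - b (j - 1)) * (?\<sigma> * e i0 j) \<le> (b j - b (j - 1)) * E j"
      using mono[of "j - 1"] j by (intro mult_left_mono) auto
  qed
  moreover have "?\<sigma> * (\<Sum>j<l. b j * (e i0 (Suc j) - e i0 j)) \<le> Max ((\<lambda>i. \<bar>\<rho> i\<bar>) ` {1..K-1})"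
  proof -
    have "?\<sigma> * (\<Sum>j<l. b j * (e i0 (Suc j) - e i0 j))
        = ?\<sigma> * (- v * (e (i0+1) l - e (i0-1) l) / (2*h) + D * (e (i0+1) l - 2 * e i0 l + e (i0-1) l) / h^2)
          + ?\<sigma> * \<rho> i0"
      using eq[OF i0(1)] by (simp add: algebra_simps)
    also have "\<dots> \<le> \<bar>\<rho> i0\<bar>"
    proof -
      have "\<bar>e i l\<bar> \<le> \<bar>e i0 l\<bar>" if "i \<in> {1..K-1}" for i
        using E_ge[OF that] i0(2) by simp
      from stencil_sgn_nonpos_at_abs_max[where w = "\<lambda>i. e i l", OF h bd i0(1) this]
      show ?thesis using \<sigma>_le_abs[of "\<rho> i0"] by simp
    qed
    also have "\<dots> \<le> Max ((\<lambda>i. \<bar>\<rho> i\<bar>) ` {1..K-1})"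
      using i0 by (intro Max_ge) auto
    finally show ?thesis .
  qed
  ultimately show ?thesis unfolding E_def by linarith
qed

lemma l1_energy_lower:
  fixes e :: "nat \<Rightarrow> nat \<Rightarrow> real" and b :: "nat \<Rightarrow> real"
  assumes l: "1 \<le> l"
    and mono: "\<And>j. Suc j < l \<Longrightarrow> b j \<le> b (Suc j)"
    and e0: "\<And>i. i \<in> S \<Longrightarrow> e i 0 = 0"
  shows "b (l - 1) * L2_set (\<lambda>i. e i l) S ^ 2
           - (\<Sum>j\<in>{1..<l}. (b j - b (j - 1)) * (L2_set (\<lambda>i. e i l) S * L2_set (\<lambda>i. e i j) S))
         \<le> (\<Sum>i\<in>S. e i l * (\<Sum>j<l. b j * (e i (Suc j) - e i j)))"
proof -
  define N where "N j = L2_set (\<lambda>i. e i j) S" for j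
  define c where "c j = b j - b (j - 1)" for j
  have "(\<Sum>i\<in>S. e i l * (\<Sum>j<l. b j * (e i (Suc j) - e i j)))
      = (\<Sum>i\<in>S. b (l - 1) * (e i l * e i l) - (\<Sum>j\<in>{1..<l}. c j * (e i l * e i j)))"
  proof (rule sum.cong)
    fix i assume "i \<in> S"
    then show "e i l * (\<Sum>j<l. b j * (e i (Suc j) - e i j))
        = b (l - 1) * (e i l * e i l) - (\<Sum>j\<in>{1..<l}. c j * (e i l * e i j))"
      using sum_weighted_diffs_by_parts_scaled[where e = "e i" and c = "e i l" and b = b, OF l e0]
      unfolding c_def by (simp add: mult.left_commute)
  qed simp
  also have "\<dots> = b (l - 1) * (\<Sum>i\<in>S. e i l * e i l) - (\<Sum>j\<in>{1..<l}. c j * (\<Sum>i\<in>S. e i l * e i j))"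
    by (simp add: sum_subtractf sum_distrib_left sum.swap[of _ S])
  also have "(\<Sum>i\<in>S. e i l * e i l) = N l ^ 2"
    unfolding N_def L2_set_def by (simp add: power2_eq_square[symmetric] sum_nonneg)
  finally have energy: "(\<Sum>i\<in>S. e i l * (\<Sum>j<l. b j * (e i (Suc j) - e i j)))
      = b (l - 1) * N l ^ 2 - (\<Sum>j\<in>{1..<l}. c j * (\<Sum>i\<in>S. e i l * e i j))" .
  have "(\<Sum>j\<in>{1..<l}. c j * (\<Sum>i\<in>S. e i l * e i j)) \<le> (\<Sum>j\<in>{1..<l}. c j * (N l * N j))"
  proof (rule sum_mono)
    fix j assume j: "j \<in> {1..<l}"
    have "(\<Sum>i\<in>S. e i l * e i j) \<le> (\<Sum>i\<in>S. \<bar>e i l\<bar> * \<bar>e i j\<bar>)"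
      by (rule sum_mono) (simp add: abs_mult[symmetric])
    also have "\<dots> \<le> N l * N j" unfolding N_def by (rule L2_set_mult_ineq)
    finally show "c j * (\<Sum>i\<in>S. e i l * e i j) \<le> c j * (N l * N j)"
      using mono[of "j - 1"] j unfolding c_def by (intro mult_left_mono) auto
  qed
  with energy show ?thesis unfolding N_def c_def by linarith
qed

lemma sum_mult_convection_diffusion_le:
  fixes w \<rho> :: "nat \<Rightarrow> real" and v D h :: real
  assumes K: "1 \<le> K" and bd: "w 0 = 0" "w K = 0" and h: "0 < h" "0 \<le> D"
  shows "(\<Sum>i\<in>{1..K-1}. w i * (- v * (w (i+1) - w (i-1)) / (2*h) + D * (w (i+1) - 2 * w i + w (i-1)) / h^2 + \<rho> i))
         \<le> L2_set w {1..K-1} * L2_set \<rho> {1..K-1}"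
proof -
  have S: "{1..K-1} = {1..<K}" using K by auto
  have "(\<Sum>i\<in>{1..K-1}. w i * (- v * (w (i+1) - w (i-1)) / (2*h) + D * (w (i+1) - 2 * w i + w (i-1)) / h^2 + \<rho> i))
      = - (\<Sum>i\<in>{1..<K}. w i * (v * (w (i + 1) - w (i - 1)) / (2 * h) - D * (w (i + 1) - 2 * w i + w (i - 1)) / h^2))
        + (\<Sum>i\<in>{1..K-1}. w i * \<rho> i)"
    unfolding S sum_negf[symmetric] sum.distrib[symmetric]
      using h by (intro sum.cong) (simp_all add: field_simps)
  also have "\<dots> \<le> (\<Sum>i\<in>{1..K-1}. w i * \<rho> i)"
    using convection_diffusion_accretive[OF K bd h] by simp
  also have "\<dots> \<le> (\<Sum>i\<in>{1..K-1}. \<bar>w i\<bar> * \<bar>\<rho> i\<bar>)"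
    by (rule sum_mono) (simp add: abs_mult[symmetric])
  also have "\<dots> \<le> L2_set w {1..K-1} * L2_set \<rho> {1..K-1}" by (rule L2_set_mult_ineq)
  finally show ?thesis .
qed

lemma l2_norm_stability:
  fixes e :: "nat \<Rightarrow> nat \<Rightarrow> real" and b \<rho> :: "nat \<Rightarrow> real" and v D h :: real and K l :: nat
  assumes K: "2 \<le> K" and h: "0 < h" "0 < D"
    and l: "1 \<le> l"
    and mono: "\<And>j. Suc j < l \<Longrightarrow> b j \<le> b (Suc j)"
    and e0: "\<And>i. i \<in> {1..K-1} \<Longrightarrow> e i 0 = 0"
    and bd: "e 0 l = 0" "e K l = 0"
    and eq: "\<And>i. i \<in> {1..K-1} \<Longrightarrow> (\<Sum>j<l. b j * (e i (Suc j) - e i j))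
        = - v * (e (i+1) l - e (i-1) l) / (2*h) + D * (e (i+1) l - 2 * e i l + e (i-1) l) / h^2 + \<rho> i"
  shows "b (l - 1) * L2_set (\<lambda>i. e i l) {1..K-1}
     \<le> (\<Sum>j\<in>{1..<l}. (b j - b (j - 1)) * L2_set (\<lambda>i. e i j) {1..K-1})
       + L2_set \<rho> {1..K-1}"
proof -
  define S where "S = {1..K-1}"
  define N where "N j = L2_set (\<lambda>i. e i j) S" for j
  define R where "R = L2_set \<rho> S"
  define c where "c j = b j - b (j - 1)" for j
  have c0: "0 \<le> c j" if "j \<in> {1..<l}" for j
    unfolding c_def using mono[of "j - 1"] that by auto
  have N0: "0 \<le> N j" for j unfolding N_def by (rule L2_set_nonneg)
  have "(\<Sum>i\<in>S. e i l * (\<Sum>j<l. b j * (e i (Suc j) - e i j)))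
      = (\<Sum>i\<in>S. e i l * (- v * (e (i+1) l - e (i-1) l) / (2*h) + D * (e (i+1) l - 2 * e i l + e (i-1) l) / h^2 + \<rho> i))"
    unfolding S_def using eq by simp
  also have "\<dots> \<le> N l * R"
    unfolding S_def N_def R_def
      using sum_mult_convection_diffusion_le[of K "\<lambda>i. e i l"] K bd h by simp
  finally have "b (l - 1) * N l ^ 2 - (\<Sum>j\<in>{1..<l}. c j * (N l * N j)) \<le> N l * R"
    using l1_energy_lower[where S = S and l = l and b = b and e = e] l mono e0
      unfolding S_def N_def c_def by force
  then have key: "N l * (b (l - 1) * N l) \<le> N l * ((\<Sum>j\<in>{1..<l}. c j * N j) + R)"
    by (simp add: algebra_simps sum_distrib_left power2_eq_square)
  show ?thesis
  proof (cases "N l = 0")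
    case True
    have "0 \<le> (\<Sum>j\<in>{1..<l}. c j * N j) + R"
      using c0 N0 unfolding R_def by (intro add_nonneg_nonneg sum_nonneg L2_set_nonneg) simp_all
    then show ?thesis using True unfolding N_def R_def c_def S_def by simp
  next
    case False
    then have "0 < N l" using N0[of l] by simp
    with key show ?thesis unfolding N_def R_def c_def S_def by simp
  qed
qed

section \<open>Central differences\<close>

lemma power_bound_from_derivative:
  fixes \<phi> \<phi>' :: "real \<Rightarrow> real"
  assumes "0 \<le> B" "\<phi> 0 = 0"
    and d: "\<And>u. u \<in> {0..s} \<Longrightarrow> (\<phi> has_real_derivative \<phi>' u) (at u within {0..s})"
    and b: "\<And>u. u \<in> {0..s} \<Longrightarrow> \<bar>\<phi>' u\<bar> \<le> B * u ^ k"
    and u: "u \<in> {0..s}"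
  shows "\<bar>\<phi> u\<bar> \<le> B * u ^ Suc k"
proof -
  have "\<bar>\<phi> u - \<phi> 0\<bar> \<le> (B * u ^ k) * \<bar>u - 0\<bar>"
  proof (rule derivative_bound_Icc[of 0 u])
    fix w assume w: "w \<in> {0..u}"
    then have ws: "w \<in> {0..s}" using u by auto
    show "(\<phi> has_real_derivative \<phi>' w) (at w within {0..u})"
      using d[OF ws] by (rule DERIV_subset) (use u in auto)
    have "w ^ k \<le> u ^ k" using w by (intro power_mono) auto
    then show "\<bar>\<phi>' w\<bar> \<le> B * u ^ k"
      using b[OF ws] assms(1) by (meson mult_left_mono order_trans)
  qed (use u in auto)
  then show ?thesis using assms u by (simp add: algebra_simps)
qed

lemma vanishing_derivatives_power_bound:
  fixes g :: "nat \<Rightarrow> real \<Rightarrow> real"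
  assumes "0 \<le> B"
    and d: "\<And>k u. k < m \<Longrightarrow> u \<in> {0..s} \<Longrightarrow> (g k has_real_derivative g (Suc k) u) (at u within {0..s})"
    and g0: "\<And>k. k < m \<Longrightarrow> g k 0 = 0"
    and b: "\<And>u. u \<in> {0..s} \<Longrightarrow> \<bar>g m u\<bar> \<le> B"
    and u: "u \<in> {0..s}"
  shows "\<bar>g 0 u\<bar> \<le> B * u ^ m"
  using d g0 b u
proof (induction m arbitrary: g u)
  case 0
  then show ?case by simp
next
  case (Suc m)
  have "\<bar>g 1 w\<bar> \<le> B * w ^ m" if "w \<in> {0..s}" for w
    using Suc.IH[of "\<lambda>k. g (Suc k)" w] Suc.prems that by simp
  then show ?case
    using power_bound_from_derivative[OF \<open>0 \<le> B\<close>, of "g 0" s "g 1" m u] Suc.prems by simp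
qed

lemma shifted_has_real_derivative:
  fixes F F' :: "real \<Rightarrow> real"
  assumes d: "\<And>z. z \<in> {0..L} \<Longrightarrow> (F has_real_derivative F' z) (at z within {0..L})"
    and xs: "0 \<le> x - s" "x + s \<le> L" "0 \<le> s"
    and u: "u \<in> {0..s}"
  shows "((\<lambda>u. F (x + u)) has_real_derivative F' (x + u)) (at u within {0..s})"
    and "((\<lambda>u. F (x - u)) has_real_derivative - F' (x - u)) (at u within {0..s})"
proof -
  have i1: "(\<lambda>u. x + u) ` {0..s} \<subseteq> {0..L}" using xs by auto
  have i2: "(\<lambda>u. x - u) ` {0..s} \<subseteq> {0..L}" using xs by auto
  have "x + u \<in> {0..L}" "x - u \<in> {0..L}" using u xs by auto
  have "(F has_real_derivative F' (x + u)) (at (x + u) within (\<lambda>u. x + u) ` {0..s})"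
    using d[OF \<open>x + u \<in> {0..L}\<close>] i1 by (rule DERIV_subset)
  moreover have "((\<lambda>u. x + u) has_real_derivative 1) (at u within {0..s})"
    by (auto intro!: derivative_eq_intros)
  ultimately have "(F \<circ> (\<lambda>u. x + u) has_real_derivative F' (x + u) * 1) (at u within {0..s})"
    by (rule DERIV_image_chain)
  then show "((\<lambda>u. F (x + u)) has_real_derivative F' (x + u)) (at u within {0..s})"
    by (simp add: o_def)
  have "(F has_real_derivative F' (x - u)) (at (x - u) within (\<lambda>u. x - u) ` {0..s})"
    using d[OF \<open>x - u \<in> {0..L}\<close>] i2 by (rule DERIV_subset)
  moreover have "((\<lambda>u. x - u) has_real_derivative -1) (at u within {0..s})"
    by (auto intro!: derivative_eq_intros)
  ultimately have "(F \<circ> (\<lambda>u. x - u) has_real_derivative F' (x - u) * -1) (at u within {0..s})"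
    by (rule DERIV_image_chain)
  then show "((\<lambda>u. F (x - u)) has_real_derivative - F' (x - u)) (at u within {0..s})"
    by (simp add: o_def)
qed

text \<open>In the next two proofs g lists a Taylor remainder of the central difference with step u
  and its successive derivatives in u: all but the last vanish at u = 0 and the last is bounded by
  2 M, so integrating them up bounds the remainder by 2 M u^k.\<close>

lemma central_difference_error:
  fixes y0 y1 y2 y3 :: "real \<Rightarrow> real"
  assumes d1: "\<And>z. z \<in> {0..L} \<Longrightarrow> (y0 has_real_derivative y1 z) (at z within {0..L})"
    and d2: "\<And>z. z \<in> {0..L} \<Longrightarrow> (y1 has_real_derivative y2 z) (at z within {0..L})"
    and d3: "\<And>z. z \<in> {0..L} \<Longrightarrow> (y2 has_real_derivative y3 z) (at z within {0..L})"
    and M: "\<And>z. z \<in> {0..L} \<Longrightarrow> \<bar>y3 z\<bar> \<le> M"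
    and xs: "0 \<le> x - s" "x + s \<le> L" "0 < s"
  shows "\<bar>(y0 (x + s) - y0 (x - s)) / (2 * s) - y1 x\<bar> \<le> M * s^2"
proof -
  have s0: "0 \<le> s" using xs by simp
  define g where "g = [\<lambda>u. y0 (x + u) - y0 (x - u) - 2 * u * y1 x,
                       \<lambda>u. y1 (x + u) + y1 (x - u) - 2 * y1 x,
                       \<lambda>u. y2 (x + u) - y2 (x - u),
                       \<lambda>u. y3 (x + u) + y3 (x - u)]"
  have "\<bar>(g ! 0) s\<bar> \<le> (2 * M) * s ^ 3"
  proof (rule vanishing_derivatives_power_bound[where g = "(!) g"])
    fix k :: nat and u :: real assume k: "k < 3" and u: "u \<in> {0..s}"
    note shift = shifted_has_real_derivative[OF _ xs(1,2) s0 u]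
    have "k = 0 \<or> k = 1 \<or> k = 2" using k by auto
    then show "(g ! k has_real_derivative (g ! Suc k) u) (at u within {0..s})"
      unfolding g_def
      using DERIV_diff[OF DERIV_diff[OF shift(1)[OF d1] shift(2)[OF d1]]
                          DERIV_cmult[OF DERIV_ident, of "2 * y1 x" u "{0..s}"]]
            DERIV_diff[OF DERIV_add[OF shift(1)[OF d2] shift(2)[OF d2]] DERIV_const[of "2 * y1 x"]]
            DERIV_diff[OF shift(1)[OF d3] shift(2)[OF d3]]
      by (auto simp: algebra_simps)
  next
    fix u assume "u \<in> {0..s}"
    then show "\<bar>(g ! 3) u\<bar> \<le> 2 * M" unfolding g_def using M[of "x + u"] M[of "x - u"] xs by auto
  qed (use M[of x] xs in \<open>auto simp: g_def less_Suc_eq numeral_3_eq_3\<close>)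
  moreover have "(y0 (x + s) - y0 (x - s)) / (2 * s) - y1 x = (g ! 0) s / (2 * s)"
    unfolding g_def using xs by (simp add: field_simps)
  ultimately show ?thesis using xs by (simp add: abs_divide field_simps power3_eq_cube power2_eq_square)
qed

lemma second_central_difference_error:
  fixes y0 y1 y2 y3 y4 :: "real \<Rightarrow> real"
  assumes d1: "\<And>z. z \<in> {0..L} \<Longrightarrow> (y0 has_real_derivative y1 z) (at z within {0..L})"
    and d2: "\<And>z. z \<in> {0..L} \<Longrightarrow> (y1 has_real_derivative y2 z) (at z within {0..L})"
    and d3: "\<And>z. z \<in> {0..L} \<Longrightarrow> (y2 has_real_derivative y3 z) (at z within {0..L})"
    and d4: "\<And>z. z \<in> {0..L} \<Longrightarrow> (y3 has_real_derivative y4 z) (at z within {0..L})"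
    and M: "\<And>z. z \<in> {0..L} \<Longrightarrow> \<bar>y4 z\<bar> \<le> M"
    and xs: "0 \<le> x - s" "x + s \<le> L" "0 < s"
  shows "\<bar>(y0 (x + s) - 2 * y0 x + y0 (x - s)) / s^2 - y2 x\<bar> \<le> 2 * M * s^2"
proof -
  have s0: "0 \<le> s" using xs by simp
  define g where "g = [\<lambda>u. y0 (x + u) + y0 (x - u) - 2 * y0 x - u^2 * y2 x,
                       \<lambda>u. y1 (x + u) - y1 (x - u) - 2 * u * y2 x,
                       \<lambda>u. y2 (x + u) + y2 (x - u) - 2 * y2 x,
                       \<lambda>u. y3 (x + u) - y3 (x - u),
                       \<lambda>u. y4 (x + u) + y4 (x - u)]"
  have "\<bar>(g ! 0) s\<bar> \<le> (2 * M) * s ^ 4"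
  proof (rule vanishing_derivatives_power_bound[where g = "(!) g"])
    fix k :: nat and u :: real assume k: "k < 4" and u: "u \<in> {0..s}"
    note shift = shifted_has_real_derivative[OF _ xs(1,2) s0 u]
    have sq: "((\<lambda>u. u^2 * y2 x) has_real_derivative 2 * u * y2 x) (at u within {0..s})"
      by (auto intro!: derivative_eq_intros)
    have "k = 0 \<or> k = 1 \<or> k = 2 \<or> k = 3" using k by auto
    then show "(g ! k has_real_derivative (g ! Suc k) u) (at u within {0..s})"
      unfolding g_def
      using DERIV_diff[OF DERIV_diff[OF DERIV_add[OF shift(1)[OF d1] shift(2)[OF d1]] DERIV_const[of "2 * y0 x"]] sq]
            DERIV_diff[OF DERIV_diff[OF shift(1)[OF d2] shift(2)[OF d2]]
                          DERIV_cmult[OF DERIV_ident, of "2 * y2 x" u "{0..s}"]]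
            DERIV_diff[OF DERIV_add[OF shift(1)[OF d3] shift(2)[OF d3]] DERIV_const[of "2 * y2 x"]]
            DERIV_diff[OF shift(1)[OF d4] shift(2)[OF d4]]
      by (auto simp: algebra_simps)
  next
    fix u assume "u \<in> {0..s}"
    then show "\<bar>(g ! 4) u\<bar> \<le> 2 * M" unfolding g_def using M[of "x + u"] M[of "x - u"] xs by auto
  qed (use M[of x] xs in \<open>auto simp: g_def less_Suc_eq eval_nat_numeral\<close>)
  moreover have "(y0 (x + s) - 2 * y0 x + y0 (x - s)) / s^2 - y2 x = (g ! 0) s / s^2"
    unfolding g_def using xs by (simp add: field_simps)
  ultimately show ?thesis using xs by (simp add: abs_divide field_simps power2_eq_square power4_eq_xxxx)
qed

section \<open>Truncation error of the L1 formula\<close>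

locale l1_truncation = graded_mesh +
  fixes \<alpha> C0 :: real and Y Y' Y'' :: "real \<Rightarrow> real"
  assumes alpha_pos: "0 < \<alpha>" and alpha_lt_1: "\<alpha> < 1" and C0_pos: "0 < C0"
    and Y_cont: "continuous_on {0..T} Y"
    and Y_deriv: "\<And>s. s \<in> {0<..T} \<Longrightarrow> (Y has_real_derivative Y' s) (at s within {0..T})"
    and Y'_deriv: "\<And>s. s \<in> {0<..T} \<Longrightarrow> (Y' has_real_derivative Y'' s) (at s within {0..T})"
    and Y'_bound: "\<And>s. s \<in> {0<..T} \<Longrightarrow> \<bar>Y' s\<bar> \<le> C0 * (1 + s powr (\<alpha> - 1))"
    and Y''_bound: "\<And>s. s \<in> {0<..T} \<Longrightarrow> \<bar>Y'' s\<bar> \<le> C0 * (1 + s powr (\<alpha> - 2))"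
    and kern_Y'_integrable: "\<And>t. t \<in> {0<..T} \<Longrightarrow> (\<lambda>s. (t - s) powr (- \<alpha>) * Y' s) integrable_on {0..t}"
begin

definition "kern l s = (tm l - s) powr (- \<alpha>)"
definition "slope j = (Y (tm (Suc j)) - Y (tm j)) / \<tau> j"
definition "local_err l j = integral {tm j..tm (Suc j)} (\<lambda>s. kern l s * (slope j - Y' s))"

lemma Gamma_1_minus_pos: "0 < Gamma (1 - \<alpha>)" using alpha_lt_1 by simp

lemma has_integral_derivative_mesh:
  assumes "j < n"
  shows "(Y' has_integral (Y (tm (Suc j)) - Y (tm j))) {tm j..tm (Suc j)}"
proof (rule fundamental_theorem_of_calculus_interior)
  show "tm j \<le> tm (Suc j)" using tm_mono by simp
  have "{tm j..tm (Suc j)} \<subseteq> {0..T}" using tm_nonneg tm_le_T[of "Suc j"] assms by auto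
  then show "continuous_on {tm j..tm (Suc j)} Y" using Y_cont continuous_on_subset by blast
  fix u assume u: "u \<in> {tm j<..<tm (Suc j)}"
  then have u0: "0 < u" "u < T" using tm_nonneg[of j] tm_le_T[of "Suc j"] assms by auto
  then have "(Y has_real_derivative Y' u) (at u within {0..T})" using Y_deriv by auto
  then have "(Y has_real_derivative Y' u) (at u)" using at_within_Icc_at[of 0 u T] u0 by simp
  then show "(Y has_vector_derivative Y' u) (at u)"
    by (simp add: has_real_derivative_iff_has_vector_derivative)
qed

lemma slope_mult_tau: "slope j * \<tau> j = Y (tm (Suc j)) - Y (tm j)"
  unfolding slope_def using tau_pos[of j] by simp

lemma kern_derivative_integrable:
  assumes "j < l" "l \<le> n"
  shows "(\<lambda>s. kern l s * Y' s) integrable_on {tm j..tm (Suc j)}"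
proof -
  have "0 < tm l" using tm_pos assms by simp
  moreover have "tm l \<le> T" using tm_le_T assms by simp
  ultimately have "(\<lambda>s. kern l s * Y' s) integrable_on {0..tm l}" unfolding kern_def
    using kern_Y'_integrable by simp
  then show ?thesis
    by (rule integrable_subinterval_real) (use tm_nonneg tm_mono assms in auto)
qed

lemma local_err_eq:
  assumes "j < l" "l \<le> n"
  shows "local_err l j = l1_weight \<alpha> l j * (Y (tm (Suc j)) - Y (tm j)) * Gamma (1 - \<alpha>) - integral {tm j..tm (Suc j)} (\<lambda>s. kern l s * Y' s)"
proof -
  have k: "((\<lambda>s. kern l s) has_integral (l1_weight \<alpha> l j * \<tau> j * Gamma (1 - \<alpha>))) {tm j..tm (Suc j)}"
    unfolding kern_def using has_integral_kernel_l1_weight[OF alpha_pos alpha_lt_1 assms(1)] .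
  have "((\<lambda>s. kern l s * slope j) has_integral (l1_weight \<alpha> l j * \<tau> j * Gamma (1 - \<alpha>) * slope j)) {tm j..tm (Suc j)}"
    using has_integral_mult_left[OF k] .
  moreover have "((\<lambda>s. kern l s * Y' s) has_integral integral {tm j..tm (Suc j)} (\<lambda>s. kern l s * Y' s)) {tm j..tm (Suc j)}"
    using kern_derivative_integrable[OF assms] by (simp add: integrable_integral)
  ultimately have "((\<lambda>s. kern l s * slope j - kern l s * Y' s) has_integral
      (l1_weight \<alpha> l j * \<tau> j * Gamma (1 - \<alpha>) * slope j - integral {tm j..tm (Suc j)} (\<lambda>s. kern l s * Y' s))) {tm j..tm (Suc j)}"
    by (rule has_integral_diff)
  then have "local_err l j = l1_weight \<alpha> l j * \<tau> j * Gamma (1 - \<alpha>) * slope j - integral {tm j..tm (Suc j)} (\<lambda>s. kern l s * Y' s)"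
    unfolding local_err_def by (simp add: right_diff_distrib integral_unique)
  then show ?thesis using slope_mult_tau[of j] by (simp add: ac_simps)
qed

lemma l1_truncation_eq_sum_local_err:
  assumes "1 \<le> l" "l \<le> n"
  shows "(\<Sum>j<l. l1_weight \<alpha> l j * (Y (tm (Suc j)) - Y (tm j))) - integral {0..tm l} (\<lambda>s. (tm l - s) powr (- \<alpha>) * Y' s) / Gamma (1 - \<alpha>)
       = (\<Sum>j<l. local_err l j) / Gamma (1 - \<alpha>)"
proof -
  have "0 < tm l" using tm_pos assms by simp
  moreover have "tm l \<le> T" using tm_le_T assms by simp
  ultimately have int: "(\<lambda>s. kern l s * Y' s) integrable_on {0..tm l}" unfolding kern_def
    using kern_Y'_integrable by simp
  have sp: "integral {0..tm l} (\<lambda>s. kern l s * Y' s) = (\<Sum>j<l. integral {tm j..tm (Suc j)} (\<lambda>s. kern l s * Y' s))"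
    by (rule integral_split_at_mesh[where t = tm, OF tm_mono tm_0 int]) auto
  have "(\<Sum>j<l. local_err l j) = (\<Sum>j<l. l1_weight \<alpha> l j * (Y (tm (Suc j)) - Y (tm j)) * Gamma (1 - \<alpha>)) - integral {0..tm l} (\<lambda>s. kern l s * Y' s)"
    unfolding sp sum_subtractf[symmetric] using local_err_eq assms by (intro sum.cong) auto
  moreover have "(\<Sum>j<l. l1_weight \<alpha> l j * (Y (tm (Suc j)) - Y (tm j)) * Gamma (1 - \<alpha>))
      = (\<Sum>j<l. l1_weight \<alpha> l j * (Y (tm (Suc j)) - Y (tm j))) * Gamma (1 - \<alpha>)"
    by (simp add: sum_distrib_right)
  ultimately have "(\<Sum>j<l. local_err l j) / Gamma (1 - \<alpha>) = (\<Sum>j<l. l1_weight \<alpha> l j * (Y (tm (Suc j)) - Y (tm j))) - integral {0..tm l} (\<lambda>s. kern l s * Y' s) / Gamma (1 - \<alpha>)"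
    using Gamma_1_minus_pos by (simp add: diff_divide_distrib)
  then show ?thesis unfolding kern_def by simp
qed

lemma kern_mono:
  assumes "s \<le> s'" "s' < tm l"
  shows "kern l s \<le> kern l s'"
  unfolding kern_def using assms alpha_pos by (intro powr_mono2') auto

lemma kern_nonneg: "0 \<le> kern l s" unfolding kern_def by simp

lemma slope_derivative_dist:
  assumes j: "1 \<le> j" "Suc j \<le> n" and s: "s \<in> {tm j..tm (Suc j)}"
  shows "\<bar>slope j - Y' s\<bar> \<le> C0 * (1 + tm j powr (\<alpha> - 2)) * \<tau> j"
proof -
  let ?S = "{tm j..tm (Suc j)}"
  let ?M = "C0 * (1 + tm j powr (\<alpha> - 2))"
  have tj: "0 < tm j" using tm_pos j by simp
  have sub: "?S \<subseteq> {0<..T}" using tj tm_le_T[of "Suc j"] j by auto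
  have sub2: "?S \<subseteq> {0..T}" using sub by auto
  have d1: "(Y has_real_derivative Y' u) (at u within ?S)" if "u \<in> ?S" for u
  proof -
    have "u \<in> {0<..T}" using that sub by auto
    from DERIV_subset[OF Y_deriv[OF this] sub2] show ?thesis .
  qed
  have d2: "(Y' has_real_derivative Y'' u) (at u within ?S)" if "u \<in> ?S" for u
  proof -
    have "u \<in> {0<..T}" using that sub by auto
    from DERIV_subset[OF Y'_deriv[OF this] sub2] show ?thesis .
  qed
  have bM: "\<bar>Y'' u\<bar> \<le> ?M" if "u \<in> ?S" for u
  proof -
    have "u powr (\<alpha> - 2) \<le> tm j powr (\<alpha> - 2)"
      using that tj alpha_lt_1 by (intro powr_mono2') auto
    then have "C0 * (1 + u powr (\<alpha> - 2)) \<le> ?M" using C0_pos by (intro mult_left_mono) auto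
    moreover have "u \<in> {0<..T}" using that sub by auto
    ultimately show ?thesis using Y''_bound[of u] by linarith
  qed
  have lipY': "\<bar>Y' u - Y' s\<bar> \<le> ?M * \<tau> j" if "u \<in> ?S" for u
  proof -
    have "\<bar>Y' u - Y' s\<bar> \<le> ?M * \<bar>u - s\<bar>"
      by (rule derivative_bound_Icc[OF d2 bM that s])
    also have "\<dots> \<le> ?M * \<tau> j"
      using that s C0_pos tj unfolding tau_def by (intro mult_left_mono) (auto simp: abs_le_iff)
    finally show ?thesis .
  qed
  have d3: "((\<lambda>u. Y u - u * Y' s) has_real_derivative Y' u - Y' s) (at u within ?S)" if "u \<in> ?S" for u
    using d1[OF that] by (auto intro!: derivative_eq_intros)
  have "\<bar>(Y (tm (Suc j)) - tm (Suc j) * Y' s) - (Y (tm j) - tm j * Y' s)\<bar> \<le> (?M * \<tau> j) * \<bar>tm (Suc j) - tm j\<bar>"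
    by (rule derivative_bound_Icc[OF d3 lipY']) (use tm_mono[of j "Suc j"] in auto)
  also have "(Y (tm (Suc j)) - tm (Suc j) * Y' s) - (Y (tm j) - tm j * Y' s) = \<tau> j * (slope j - Y' s)"
    using slope_mult_tau[of j] unfolding tau_def by (simp add: algebra_simps)
  finally have "\<tau> j * \<bar>slope j - Y' s\<bar> \<le> \<tau> j * (?M * \<tau> j)"
    using tau_pos[of j] unfolding tau_def by (simp add: abs_mult mult.commute)
  then show ?thesis using tau_pos[of j] by simp
qed

lemma local_err_integrable:
  assumes "j < l" "l \<le> n"
  shows "(\<lambda>s. kern l s * (slope j - Y' s)) integrable_on {tm j..tm (Suc j)}"
proof -
  have k: "((\<lambda>s. kern l s) has_integral (l1_weight \<alpha> l j * \<tau> j * Gamma (1 - \<alpha>))) {tm j..tm (Suc j)}"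
    unfolding kern_def using has_integral_kernel_l1_weight[OF alpha_pos alpha_lt_1 assms(1)] .
  have "(\<lambda>s. kern l s * slope j) integrable_on {tm j..tm (Suc j)}"
    using has_integral_mult_left[OF k] by blast
  then have "(\<lambda>s. kern l s * slope j - kern l s * Y' s) integrable_on {tm j..tm (Suc j)}"
    using kern_derivative_integrable[OF assms] by (rule integrable_diff)
  then show ?thesis by (simp add: right_diff_distrib)
qed

lemma local_err_middle:
  assumes j: "1 \<le> j" "Suc j < l" "l \<le> n"
  shows "\<bar>local_err l j\<bar> \<le> \<tau> j ^ 2 * (C0 * (1 + tm j powr (\<alpha> - 2))) * (kern l (tm (Suc j)) - kern l (tm j))"
proof -
  let ?S = "{tm j..tm (Suc j)}"
  let ?M = "C0 * (1 + tm j powr (\<alpha> - 2))"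
  let ?D = "kern l (tm (Suc j)) - kern l (tm j)"
  have jn: "j < n" using j by simp
  have z: "((\<lambda>s. slope j - Y' s) has_integral 0) ?S"
  proof -
    have "((\<lambda>s. slope j) has_integral (Henstock_Kurzweil_Integration.content ?S *\<^sub>R slope j)) ?S"
      by (rule has_integral_const_real)
    moreover have "Henstock_Kurzweil_Integration.content ?S *\<^sub>R slope j = Y (tm (Suc j)) - Y (tm j)"
      using tm_mono[of j "Suc j"] slope_mult_tau[of j] unfolding tau_def by (simp add: mult.commute)
    ultimately have "((\<lambda>s. slope j) has_integral (Y (tm (Suc j)) - Y (tm j))) ?S" by simp
    from has_integral_diff[OF this has_integral_derivative_mesh[OF jn]] show ?thesis by simp
  qed
  then have z2: "((\<lambda>s. kern l (tm j) * (slope j - Y' s)) has_integral 0) ?S"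
    using has_integral_mult_right[OF z, of "kern l (tm j)"] by simp
  have i1: "(\<lambda>s. kern l s * (slope j - Y' s)) integrable_on ?S" using local_err_integrable j by simp
  have "((\<lambda>s. kern l s * (slope j - Y' s) - kern l (tm j) * (slope j - Y' s)) has_integral (local_err l j - 0)) ?S"
    unfolding local_err_def using has_integral_diff[OF integrable_integral[OF i1] z2] .
  then have f: "((\<lambda>s. (kern l s - kern l (tm j)) * (slope j - Y' s)) has_integral local_err l j) ?S"
    by (simp add: left_diff_distrib)
  have bnd: "norm ((kern l s - kern l (tm j)) * (slope j - Y' s)) \<le> ?D * (?M * \<tau> j)" if "s \<in> cbox (tm j) (tm (Suc j))" for s
  proof -
    have s: "s \<in> ?S" using that by simp
    have tl: "tm (Suc j) < tm l" using tm_less j by simp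
    have "kern l (tm j) \<le> kern l s" "kern l s \<le> kern l (tm (Suc j))"
      using kern_mono s tl by auto
    then have "\<bar>kern l s - kern l (tm j)\<bar> \<le> ?D" by simp
    moreover have "\<bar>slope j - Y' s\<bar> \<le> ?M * \<tau> j"
      using slope_derivative_dist[of j s] j s by simp
    ultimately show ?thesis unfolding real_norm_def abs_mult by (intro mult_mono) auto
  qed
  have D0: "0 \<le> ?D"
    using kern_mono[of "tm j" "tm (Suc j)" l] tm_mono[of j "Suc j"] tm_less[of "Suc j" l] j by simp
  have "norm (local_err l j) \<le> ?D * (?M * \<tau> j) * Henstock_Kurzweil_Integration.content (cbox (tm j) (tm (Suc j)))"
    by (rule has_integral_bound[where f = "\<lambda>s. (kern l s - kern l (tm j)) * (slope j - Y' s)"])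
       (use f bnd D0 C0_pos tau_pos[of j] in \<open>auto intro!: mult_nonneg_nonneg simp: add_nonneg_nonneg\<close>)
  also have "Henstock_Kurzweil_Integration.content (cbox (tm j) (tm (Suc j))) = \<tau> j"
    using tm_mono[of j "Suc j"] unfolding tau_def by simp
  finally show ?thesis by (simp add: power2_eq_square ac_simps)
qed

lemma local_err_last:
  assumes l: "2 \<le> l" "l \<le> n"
  shows "\<bar>local_err l (l - 1)\<bar> \<le> \<tau> (l - 1) powr (2 - \<alpha>) * (C0 * (1 + tm (l - 1) powr (\<alpha> - 2))) / (1 - \<alpha>)"
proof -
  define j where "j = l - 1"
  have jl: "Suc j = l" "1 \<le> j" "j < l" using l unfolding j_def by auto
  let ?S = "{tm j..tm (Suc j)}"
  let ?M = "C0 * (1 + tm j powr (\<alpha> - 2))"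
  have M0: "0 \<le> ?M" using C0_pos by simp
  have i1: "(\<lambda>s. kern l s * (slope j - Y' s)) integrable_on ?S"
    using local_err_integrable[of j l] jl l by simp
  have g: "((\<lambda>s. kern l s * (?M * \<tau> j)) has_integral (\<tau> j powr (1 - \<alpha>) / (1 - \<alpha>) * (?M * \<tau> j))) ?S"
  proof -
    have "((\<lambda>s. (tm l - s) powr (- \<alpha>)) has_integral
           ((tm l - tm j) powr (1 - \<alpha>) - (tm l - tm l) powr (1 - \<alpha>)) / (1 - \<alpha>)) {tm j..tm l}"
      by (rule has_integral_powr_kernel) (use tm_mono jl alpha_pos alpha_lt_1 in auto)
    then have "((\<lambda>s. kern l s) has_integral \<tau> j powr (1 - \<alpha>) / (1 - \<alpha>)) ?S"
      unfolding kern_def tau_def using jl alpha_lt_1 by simp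
    from has_integral_mult_left[OF this] show ?thesis .
  qed
  have "norm (local_err l j) \<le> integral ?S (\<lambda>s. kern l s * (?M * \<tau> j))"
    unfolding local_err_def
  proof (rule integral_norm_bound_integral[OF i1])
    show "(\<lambda>s. kern l s * (?M * \<tau> j)) integrable_on ?S" using g by blast
    fix s assume s: "s \<in> ?S"
    have "\<bar>slope j - Y' s\<bar> \<le> ?M * \<tau> j" using slope_derivative_dist[of j s] jl l s by simp
    then show "norm (kern l s * (slope j - Y' s)) \<le> kern l s * (?M * \<tau> j)"
      unfolding real_norm_def abs_mult using kern_nonneg[of l s] by (simp add: mult_left_mono)
  qed
  also have "\<dots> = \<tau> j powr (1 - \<alpha>) / (1 - \<alpha>) * (?M * \<tau> j)"
    using g by (rule integral_unique)
  also have "\<dots> = \<tau> j powr (2 - \<alpha>) * ?M / (1 - \<alpha>)"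
  proof -
    have "\<tau> j powr (1 - \<alpha>) * \<tau> j = \<tau> j powr (2 - \<alpha>)"
    proof -
      have "\<tau> j powr (2 - \<alpha>) = \<tau> j powr ((1 - \<alpha>) + 1)" by simp
      also have "\<dots> = \<tau> j powr (1 - \<alpha>) * \<tau> j powr 1" by (rule powr_add)
      finally show ?thesis using tau_pos[of j] by simp
    qed
    then show ?thesis by (simp add: field_simps)
  qed
  finally show ?thesis unfolding j_def by simp
qed

text \<open>Y' with its unconstrained value at the singular point 0 replaced by 0, so that the bound
  Y'_bound holds on all of [0, T].\<close>

definition "Y'0 s = (if s = 0 then 0 else Y' s)"

lemma t1_pos: "0 < tm 1" using tm_pos by simp

lemma t1_le: "tm 1 \<le> T" using tm_le_T n_ge by simp

lemma tau_0: "\<tau> 0 = tm 1" unfolding tau_def by simp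

lemma has_integral_Y'0: "(Y'0 has_integral (Y (tm 1) - Y 0)) {0..tm 1}"
proof -
  have "(Y' has_integral (Y (tm 1) - Y (tm 0))) {tm 0..tm (Suc 0)}"
    using has_integral_derivative_mesh[of 0] n_ge by simp
  then have "(Y' has_integral (Y (tm 1) - Y 0)) {0..tm 1}" by simp
  then show ?thesis
    using has_integral_spike_finite_eq[of "{0}" "{0..tm 1}" Y'0 Y'] by (auto simp: Y'0_def)
qed

lemma Y'0_bound: "s \<in> {0..T} \<Longrightarrow> \<bar>Y'0 s\<bar> \<le> C0 * (1 + s powr (\<alpha> - 1))"
  unfolding Y'0_def using Y'_bound[of s] C0_pos by auto

lemma has_integral_derivative_majorant: "((\<lambda>s. C0 * (1 + s powr (\<alpha> - 1))) has_integral C0 * (tm 1 + tm 1 powr \<alpha> / \<alpha>)) {0..tm 1}"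
proof -
  have "((\<lambda>s. 1) has_integral tm 1) {0..tm 1}"
    using has_integral_const_real[of "1::real" 0 "tm 1"] less_imp_le[OF t1_pos] by simp
  moreover have "((\<lambda>s. s powr (\<alpha> - 1)) has_integral tm 1 powr \<alpha> / \<alpha>) {0..tm 1}"
    using has_integral_powr_Icc[of 0 "tm 1" \<alpha>] t1_pos alpha_pos by simp
  ultimately have "((\<lambda>s. 1 + s powr (\<alpha> - 1)) has_integral (tm 1 + tm 1 powr \<alpha> / \<alpha>)) {0..tm 1}"
    by (rule has_integral_add)
  from has_integral_mult_right[OF this, of C0] show ?thesis .
qed

lemma first_increment_bound: "\<bar>Y (tm 1) - Y 0\<bar> \<le> C0 * (tm 1 + tm 1 powr \<alpha> / \<alpha>)"
proof -
  have N: "norm (integral {0..tm 1} Y'0) \<le> integral {0..tm 1} (\<lambda>s. C0 * (1 + s powr (\<alpha> - 1)))"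
  proof (rule integral_norm_bound_integral)
    show "Y'0 integrable_on {0..tm 1}" using has_integral_Y'0 by blast
    show "(\<lambda>s. C0 * (1 + s powr (\<alpha> - 1))) integrable_on {0..tm 1}"
      using has_integral_derivative_majorant by blast
    fix s assume "s \<in> {0..tm 1}"
    then show "norm (Y'0 s) \<le> C0 * (1 + s powr (\<alpha> - 1))" using Y'0_bound[of s] t1_le by simp
  qed
  then show ?thesis
    unfolding integral_unique[OF has_integral_Y'0] integral_unique[OF has_integral_derivative_majorant] real_norm_def .
qed

lemma local_err_first_eq:
  assumes "1 \<le> l" "l \<le> n"
  shows "local_err l 0 = integral {0..tm 1} (\<lambda>s. kern l s * (slope 0 - Y'0 s))"
    and "(\<lambda>s. kern l s * (slope 0 - Y'0 s)) integrable_on {0..tm 1}"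
proof -
  have i: "(\<lambda>s. kern l s * (slope 0 - Y' s)) integrable_on {0..tm 1}"
    using local_err_integrable[of 0 l] assms by simp
  show "local_err l 0 = integral {0..tm 1} (\<lambda>s. kern l s * (slope 0 - Y'0 s))"
    unfolding local_err_def by (simp, rule integral_spike[of "{0}"]) (auto simp: Y'0_def)
  show "(\<lambda>s. kern l s * (slope 0 - Y'0 s)) integrable_on {0..tm 1}"
    by (rule integrable_spike_finite[of "{0}", OF _ _ i]) (auto simp: Y'0_def)
qed

lemma local_err_first:
  assumes l: "2 \<le> l" "l \<le> n"
  shows "\<bar>local_err l 0\<bar> \<le> 2 * C0 * (tm l - tm 1) powr (- \<alpha>) * (tm 1 + tm 1 powr \<alpha> / \<alpha>)"
proof -
  let ?K = "kern l (tm 1)"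
  have t1l: "tm 1 < tm l" using tm_less l by simp
  have K0: "0 \<le> ?K" by (rule kern_nonneg)
  have g: "((\<lambda>s. ?K * (\<bar>slope 0\<bar> + C0 * (1 + s powr (\<alpha> - 1)))) has_integral
      ?K * (\<bar>slope 0\<bar> * tm 1 + C0 * (tm 1 + tm 1 powr \<alpha> / \<alpha>))) {0..tm 1}"
  proof -
    have "((\<lambda>s. \<bar>slope 0\<bar>) has_integral \<bar>slope 0\<bar> * tm 1) {0..tm 1}"
      using has_integral_const_real[of "\<bar>slope 0\<bar>" 0 "tm 1"] less_imp_le[OF t1_pos]
        by (simp add: mult.commute)
    from has_integral_add[OF this has_integral_derivative_majorant] show ?thesis
      by (rule has_integral_mult_right)
  qed
  have eq: "local_err l 0 = integral {0..tm 1} (\<lambda>s. kern l s * (slope 0 - Y'0 s))"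
    using local_err_first_eq(1)[of l] l by simp
  have int: "(\<lambda>s. kern l s * (slope 0 - Y'0 s)) integrable_on {0..tm 1}"
    using local_err_first_eq(2)[of l] l by simp
  have "norm (local_err l 0) \<le> integral {0..tm 1} (\<lambda>s. ?K * (\<bar>slope 0\<bar> + C0 * (1 + s powr (\<alpha> - 1))))"
    unfolding eq
  proof (rule integral_norm_bound_integral[OF int])
    show "(\<lambda>s. ?K * (\<bar>slope 0\<bar> + C0 * (1 + s powr (\<alpha> - 1)))) integrable_on {0..tm 1}"
      using g by blast
    fix s assume s: "s \<in> {0..tm 1}"
    have "kern l s \<le> ?K" using kern_mono[of s "tm 1" l] s t1l by simp
    moreover have "\<bar>slope 0 - Y'0 s\<bar> \<le> \<bar>slope 0\<bar> + C0 * (1 + s powr (\<alpha> - 1))"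
      using Y'0_bound[of s] s t1_le by (auto simp: abs_le_iff)
    ultimately show "norm (kern l s * (slope 0 - Y'0 s)) \<le> ?K * (\<bar>slope 0\<bar> + C0 * (1 + s powr (\<alpha> - 1)))"
      unfolding real_norm_def abs_mult using kern_nonneg[of l s]
      by (intro mult_mono) auto
  qed
  also have "\<dots> = ?K * (\<bar>slope 0\<bar> * tm 1 + C0 * (tm 1 + tm 1 powr \<alpha> / \<alpha>))"
    using g by (rule integral_unique)
  also have "\<dots> \<le> ?K * (2 * (C0 * (tm 1 + tm 1 powr \<alpha> / \<alpha>)))"
  proof -
    have "\<bar>slope 0\<bar> * tm 1 = \<bar>Y (tm 1) - Y 0\<bar>"
    proof -
      have "\<bar>slope 0 * tm 1\<bar> = \<bar>Y (tm 1) - Y 0\<bar>" using slope_mult_tau[of 0] tau_0 by simp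
      then show ?thesis using t1_pos by (simp add: abs_mult)
    qed
    then show ?thesis using first_increment_bound K0 by (intro mult_left_mono) auto
  qed
  finally show ?thesis unfolding kern_def by (simp add: algebra_simps)
qed

text \<open>Splitting [0, t_1] at its midpoint: near 0 the kernel is bounded, near t_1 the singular
  factor s^(alpha - 1) is.\<close>

lemma kern_first_mult_powr_le:
  assumes "s \<in> {0..tm 1}"
  shows "kern 1 s * s powr (\<alpha> - 1) \<le> (tm 1 / 2) powr (- \<alpha>) * s powr (\<alpha> - 1) + (tm 1 / 2) powr (\<alpha> - 1) * kern 1 s"
proof (cases "s \<le> tm 1 / 2")
  case True
  have "kern 1 s \<le> (tm 1 / 2) powr (- \<alpha>)" unfolding kern_def
    using True t1_pos alpha_pos by (intro powr_mono2') auto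
  then have "kern 1 s * s powr (\<alpha> - 1) \<le> (tm 1 / 2) powr (- \<alpha>) * s powr (\<alpha> - 1)"
    by (rule mult_right_mono) simp
  then show ?thesis using kern_nonneg[of 1 s] by (simp add: add_increasing2)
next
  case False
  have "s powr (\<alpha> - 1) \<le> (tm 1 / 2) powr (\<alpha> - 1)"
    using False t1_pos alpha_lt_1 by (intro powr_mono2') auto
  then have "kern 1 s * s powr (\<alpha> - 1) \<le> (tm 1 / 2) powr (\<alpha> - 1) * kern 1 s"
    using mult_right_mono[OF _ kern_nonneg[of 1 s]] by (metis mult.commute)
  then show ?thesis by (simp add: add_increasing)
qed

lemma first_slope_bound: "tm 1 powr (1 - \<alpha>) * \<bar>slope 0\<bar> \<le> C0 * (T powr (1 - \<alpha>) + 1 / \<alpha>)"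
proof -
  define q where "q = tm 1"
  have q: "0 < q" "q \<le> T" unfolding q_def using t1_pos t1_le by auto
  have "\<bar>slope 0\<bar> * q = \<bar>slope 0 * q\<bar>" using q by (simp add: abs_mult)
  also have "\<dots> = \<bar>Y (tm 1) - Y 0\<bar>" using slope_mult_tau[of 0] tau_0 q_def by simp
  also have "\<dots> \<le> C0 * (q + q powr \<alpha> / \<alpha>)"
    unfolding q_def by (rule first_increment_bound)
  finally have "q powr (1 - \<alpha>) * \<bar>slope 0\<bar> \<le> q powr (1 - \<alpha>) * (C0 * (q + q powr \<alpha> / \<alpha>)) / q"
    using q by (simp add: divide_right_mono mult_left_mono pos_le_divide_eq mult.assoc)
  also have "\<dots> = C0 * (q powr (1 - \<alpha>) + (q powr (1 - \<alpha>) * q powr \<alpha>) / (\<alpha> * q))"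
    using q alpha_pos by (simp add: field_simps)
  also have "\<dots> = C0 * (q powr (1 - \<alpha>) + 1 / \<alpha>)"
    using powr_cancel_identities(3)[OF q(1), of \<alpha>] q alpha_pos by simp
  also have "\<dots> \<le> C0 * (T powr (1 - \<alpha>) + 1 / \<alpha>)"
    using q alpha_lt_1 C0_pos by (simp add: powr_mono2)
  finally show ?thesis unfolding q_def .
qed

definition "Ka = C0 * ((2 * T powr (1 - \<alpha>) + 1 / \<alpha> + 2 powr (1 - \<alpha>)) / (1 - \<alpha>) + 2 powr \<alpha> / \<alpha>)"

lemma local_err_first_step: "\<bar>local_err 1 0\<bar> \<le> Ka"
proof -
  define q where "q = tm 1"
  have q: "0 < q" "q \<le> T" unfolding q_def using t1_pos t1_le by auto
  define k1 where "k1 = (q / 2) powr (\<alpha> - 1)"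
  define k2 where "k2 = (q / 2) powr (- \<alpha>)"
  define A where "A = \<bar>slope 0\<bar> + C0 + C0 * k1"
  have k: "((\<lambda>s. kern 1 s) has_integral q powr (1 - \<alpha>) / (1 - \<alpha>)) {0..q}"
    using has_integral_powr_kernel[of 0 q q \<alpha>] q alpha_pos alpha_lt_1 unfolding kern_def q_def by simp
  have sp: "((\<lambda>s. s powr (\<alpha> - 1)) has_integral q powr \<alpha> / \<alpha>) {0..q}"
    using has_integral_powr_Icc[of 0 q \<alpha>] q alpha_pos by simp
  have g: "((\<lambda>s. kern 1 s * A + C0 * k2 * s powr (\<alpha> - 1)) has_integral
      (q powr (1 - \<alpha>) / (1 - \<alpha>) * A + C0 * k2 * (q powr \<alpha> / \<alpha>))) {0..q}"
    by (intro has_integral_add has_integral_mult_left has_integral_mult_right k sp)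
  have "norm (local_err 1 0) \<le> integral {0..q} (\<lambda>s. kern 1 s * A + C0 * k2 * s powr (\<alpha> - 1))"
    unfolding local_err_first_eq(1)[of 1, OF order_refl n_ge, folded q_def]
  proof (rule integral_norm_bound_integral)
    show "(\<lambda>s. kern 1 s * (slope 0 - Y'0 s)) integrable_on {0..q}"
      using local_err_first_eq(2)[of 1] n_ge q_def by simp
    show "(\<lambda>s. kern 1 s * A + C0 * k2 * s powr (\<alpha> - 1)) integrable_on {0..q}" using g by blast
    fix s assume s: "s \<in> {0..q}"
    have "\<bar>slope 0 - Y'0 s\<bar> \<le> \<bar>slope 0\<bar> + C0 + C0 * s powr (\<alpha> - 1)"
      using Y'0_bound[of s] s q
        by (simp add: abs_le_iff distrib_left) (smt (verit) abs_ge_self abs_ge_minus_self)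
    then have "norm (kern 1 s * (slope 0 - Y'0 s)) \<le> kern 1 s * (\<bar>slope 0\<bar> + C0 + C0 * s powr (\<alpha> - 1))"
      unfolding real_norm_def abs_mult using kern_nonneg[of 1 s] by (simp add: mult_left_mono)
    also have "\<dots> = kern 1 s * (\<bar>slope 0\<bar> + C0) + C0 * (kern 1 s * s powr (\<alpha> - 1))"
      by (simp add: algebra_simps)
    also have "\<dots> \<le> kern 1 s * (\<bar>slope 0\<bar> + C0) + C0 * (k2 * s powr (\<alpha> - 1) + k1 * kern 1 s)"
      using kern_first_mult_powr_le[of s] s C0_pos unfolding k1_def k2_def q_def
      by (intro add_left_mono mult_left_mono) auto
    also have "\<dots> = kern 1 s * A + C0 * k2 * s powr (\<alpha> - 1)"
      unfolding A_def by (simp add: algebra_simps)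
    finally show "norm (kern 1 s * (slope 0 - Y'0 s)) \<le> kern 1 s * A + C0 * k2 * s powr (\<alpha> - 1)" .
  qed
  also have "\<dots> = q powr (1 - \<alpha>) / (1 - \<alpha>) * A + C0 * k2 * (q powr \<alpha> / \<alpha>)"
    using g by (rule integral_unique)
  also have "\<dots> = (q powr (1 - \<alpha>) * \<bar>slope 0\<bar> + C0 * q powr (1 - \<alpha>) + C0 * (q powr (1 - \<alpha>) * k1)) / (1 - \<alpha>)
                    + C0 * (k2 * q powr \<alpha>) / \<alpha>"
    unfolding A_def by (simp add: algebra_simps add_divide_distrib)
  also have "\<dots> \<le> (C0 * (T powr (1 - \<alpha>) + 1 / \<alpha>) + C0 * T powr (1 - \<alpha>) + C0 * 2 powr (1 - \<alpha>)) / (1 - \<alpha>)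
                    + C0 * 2 powr \<alpha> / \<alpha>"
  proof -
    have "q powr (1 - \<alpha>) * k1 = 2 powr (1 - \<alpha>)" "k2 * q powr \<alpha> = 2 powr \<alpha>"
      unfolding k1_def k2_def using powr_cancel_identities(1,2)[OF q(1)] by simp_all
    moreover have "C0 * q powr (1 - \<alpha>) \<le> C0 * T powr (1 - \<alpha>)"
      using q alpha_lt_1 C0_pos by (simp add: powr_mono2)
    ultimately show ?thesis using first_slope_bound alpha_lt_1 alpha_pos unfolding q_def
      by (intro add_mono divide_right_mono) auto
  qed
  also have "\<dots> = Ka" unfolding Ka_def by (simp add: algebra_simps add_divide_distrib)
  finally show ?thesis by simp
qed

abbreviation "\<gamma> \<equiv> min (2 - \<alpha>) (r * \<alpha>)"

lemma grading_decay:
  assumes "1 \<le> l" "l \<le> n"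
  shows "real n powr (\<alpha> - 2) * (real l / real n) powr (\<alpha> - 2) \<le> T powr \<alpha> * (real n powr (- \<gamma>) * tm l powr (- \<alpha>))"
proof -
  define x where "x = real l / real n"
  have x: "0 < x" "x \<le> 1" "1 \<le> real n * x" using assms n_pos unfolding x_def by auto
  have N1: "1 \<le> real n" using n_ge by simp
  have "real n powr (- (2 - \<alpha>)) * x powr (r * \<alpha> - (2 - \<alpha>)) \<le> real n powr (- min (r * \<alpha>) (2 - \<alpha>))"
    by (rule powr_grading_bound[OF N1 x])
  then have g: "real n powr (- (2 - \<alpha>)) * x powr (r * \<alpha> - (2 - \<alpha>)) \<le> real n powr (- \<gamma>)"
    by (simp add: min.commute)
  have "real n powr (\<alpha> - 2) * x powr (\<alpha> - 2) = (real n powr (- (2 - \<alpha>)) * x powr (r * \<alpha> - (2 - \<alpha>))) * x powr (- (r * \<alpha>))"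
    using x by (simp add: powr_add[symmetric])
  also have "\<dots> \<le> real n powr (- \<gamma>) * x powr (- (r * \<alpha>))"
    using g by (rule mult_right_mono) simp
  also have "\<dots> = T powr \<alpha> * (real n powr (- \<gamma>) * tm l powr (- \<alpha>))"
    unfolding tm_powr x_def[symmetric] using T_pos by (simp add: powr_minus field_simps)
  finally show ?thesis unfolding x_def .
qed

lemma first_mesh_point_decay: "tm 1 powr \<alpha> \<le> T powr \<alpha> * real n powr (- \<gamma>)"
proof -
  have "tm 1 powr \<alpha> = (1 / real n) powr (r * \<alpha>) * T powr \<alpha>" unfolding tm_powr by simp
  also have "(1 / real n) powr (r * \<alpha>) = real n powr (- (r * \<alpha>))"
    using n_pos by (simp add: powr_divide powr_minus_divide)
  also have "real n powr (- (r * \<alpha>)) \<le> real n powr (- \<gamma>)"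
    using n_ge by (intro powr_mono) auto
  finally show ?thesis using T_pos by (simp add: mult.commute mult_left_mono)
qed

lemma tm_ge_double_first:
  assumes "2 \<le> l"
  shows "2 * tm 1 \<le> tm l"
proof -
  have "tm l = real l powr r * tm 1"
    unfolding tm_x using n_pos by (simp add: powr_divide)
  moreover have "2 \<le> real l powr r"
  proof -
    have "real l powr 1 \<le> real l powr r" using assms r_ge by (intro powr_mono) auto
    then show ?thesis using assms by simp
  qed
  ultimately show ?thesis using t1_pos by (simp add: mult_right_mono)
qed

definition "Kb = 2 * C0 * 2 powr \<alpha> * (T powr (1 - \<alpha>) + 1 / \<alpha>) * T powr \<alpha>"

lemma local_err_first_decay:
  assumes l: "2 \<le> l" "l \<le> n"
  shows "\<bar>local_err l 0\<bar> \<le> Kb * (real n powr (- \<gamma>) * tm l powr (- \<alpha>))"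
proof -
  have tl: "0 < tm l" using tm_pos l by simp
  have A: "(tm l - tm 1) powr (- \<alpha>) \<le> 2 powr \<alpha> * tm l powr (- \<alpha>)"
  proof -
    have "tm l / 2 \<le> tm l - tm 1" using tm_ge_double_first[OF l(1)] by simp
    then have "(tm l - tm 1) powr (- \<alpha>) \<le> (tm l / 2) powr (- \<alpha>)"
      using tl alpha_pos by (intro powr_mono2') auto
    also have "\<dots> = 2 powr \<alpha> * tm l powr (- \<alpha>)"
      using tl by (simp add: powr_divide powr_minus_divide field_simps)
    finally show ?thesis .
  qed
  have B: "tm 1 + tm 1 powr \<alpha> / \<alpha> \<le> (T powr (1 - \<alpha>) + 1 / \<alpha>) * tm 1 powr \<alpha>"
  proof -
    have "tm 1 = tm 1 powr (1 - \<alpha>) * tm 1 powr \<alpha>"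
      using powr_cancel_identities(3)[OF t1_pos, of \<alpha>] by simp
    also have "\<dots> \<le> T powr (1 - \<alpha>) * tm 1 powr \<alpha>"
      using t1_le t1_pos alpha_lt_1 by (intro mult_right_mono powr_mono2) auto
    finally show ?thesis by (simp add: algebra_simps)
  qed
  have "\<bar>local_err l 0\<bar> \<le> 2 * C0 * (tm l - tm 1) powr (- \<alpha>) * (tm 1 + tm 1 powr \<alpha> / \<alpha>)"
    by (rule local_err_first[OF l])
  also have "\<dots> \<le> 2 * C0 * (2 powr \<alpha> * tm l powr (- \<alpha>)) * ((T powr (1 - \<alpha>) + 1 / \<alpha>) * (T powr \<alpha> * real n powr (- \<gamma>)))"
    using A B first_mesh_point_decay C0_pos alpha_pos t1_pos
      by (intro mult_mono mult_left_mono order_trans[OF B]) (auto intro!: add_nonneg_nonneg)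
  also have "\<dots> = Kb * (real n powr (- \<gamma>) * tm l powr (- \<alpha>))"
    unfolding Kb_def by (simp add: ac_simps)
  finally show ?thesis .
qed

lemma local_err_first_step_decay: "\<bar>local_err 1 0\<bar> \<le> Ka * T powr \<alpha> * (real n powr (- \<gamma>) * tm 1 powr (- \<alpha>))"
proof -
  have Ka0: "0 \<le> Ka" unfolding Ka_def
    using C0_pos alpha_pos alpha_lt_1 by (intro mult_nonneg_nonneg add_nonneg_nonneg divide_nonneg_pos) auto
  have "1 \<le> T powr \<alpha> * real n powr (- \<gamma>) * tm 1 powr (- \<alpha>)"
  proof -
    have "tm 1 powr \<alpha> * tm 1 powr (- \<alpha>) = 1" using t1_pos by (simp add: powr_add[symmetric])
    then show ?thesis using first_mesh_point_decay t1_pos by (metis mult_right_mono powr_ge_zero)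
  qed
  then have "Ka * 1 \<le> Ka * (T powr \<alpha> * real n powr (- \<gamma>) * tm 1 powr (- \<alpha>))"
    using Ka0 by (rule mult_left_mono)
  then show ?thesis using local_err_first_step by (simp add: ac_simps)
qed

lemma tau_last_powr_bound:
  assumes l: "1 \<le> l" "l \<le> n"
  shows "\<tau> (l - 1) powr (2 - \<alpha>)
    \<le> (r * T) powr (2 - \<alpha>) * (real l / real n) powr ((r - 1) * (2 - \<alpha>)) * real n powr (\<alpha> - 2)"
proof -
  define x where "x = real l / real n"
  have x: "0 < x" "x \<le> 1" using l n_pos unfolding x_def by auto
  have rT: "0 < r * T" using r_ge T_pos by simp
  have "\<tau> (l - 1) \<le> r * T * real l powr (r - 1) / real n powr r"
    using tau_upper[of "l - 1"] l by simp
  also have "\<dots> = r * T * x powr (r - 1) / real n"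
    unfolding x_def using n_pos by (simp add: powr_divide powr_diff field_simps)
  finally have "\<tau> (l - 1) powr (2 - \<alpha>) \<le> (r * T * x powr (r - 1) / real n) powr (2 - \<alpha>)"
    using tau_pos[of "l - 1"] alpha_lt_1 by (intro powr_mono2) auto
  also have "\<dots> = (r * T) powr (2 - \<alpha>) * x powr ((r - 1) * (2 - \<alpha>)) * real n powr (\<alpha> - 2)"
  proof -
    have "inverse (real n) powr (2 - \<alpha>) = real n powr (\<alpha> - 2)"
      using powr_minus[of "real n" "2 - \<alpha>"] by (simp add: inverse_powr)
    then show ?thesis using rT x n_pos by (simp add: powr_mult powr_divide powr_powr divide_inverse)
  qed
  finally show ?thesis unfolding x_def .
qed

lemma tm_prev_powr_bound:
  assumes l: "2 \<le> l" "l \<le> n"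
  shows "tm (l - 1) powr (\<alpha> - 2) \<le> 2 powr (r * (2 - \<alpha>)) * (real l / real n) powr (r * (\<alpha> - 2)) * T powr (\<alpha> - 2)"
proof -
  define x where "x = real l / real n"
  have x: "0 < x" using l n_pos unfolding x_def by auto
  have "x / 2 \<le> real (l - 1) / real n" using l n_pos unfolding x_def by (simp add: field_simps)
  then have "(x / 2) powr r \<le> (real (l - 1) / real n) powr r"
    by (rule powr_mono2[rotated 2]) (use x r_ge in auto)
  then have "(x / 2) powr r * T \<le> tm (l - 1)"
    unfolding tm_x using T_pos by (simp add: mult_right_mono)
  then have "tm (l - 1) powr (\<alpha> - 2) \<le> ((x / 2) powr r * T) powr (\<alpha> - 2)"
    using alpha_lt_1 x T_pos by (intro powr_mono2') auto
  also have "\<dots> = x powr (r * (\<alpha> - 2)) / 2 powr (r * (\<alpha> - 2)) * T powr (\<alpha> - 2)"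
    using x T_pos by (simp add: powr_mult powr_powr powr_divide)
  also have "\<dots> = 2 powr (r * (2 - \<alpha>)) * x powr (r * (\<alpha> - 2)) * T powr (\<alpha> - 2)"
    using powr_minus_divide[of 2 "r * (\<alpha> - 2)"] by (simp add: algebra_simps)
  finally show ?thesis unfolding x_def .
qed

definition "Kc = C0 * (r * T) powr (2 - \<alpha>) * (1 + 2 powr (r * (2 - \<alpha>)) * T powr (\<alpha> - 2)) / (1 - \<alpha>) * T powr \<alpha>"

lemma local_err_last_decay:
  assumes l: "2 \<le> l" "l \<le> n"
  shows "\<bar>local_err l (l - 1)\<bar> \<le> Kc * (real n powr (- \<gamma>) * tm l powr (- \<alpha>))"
proof -
  define x where "x = real l / real n"
  have x: "0 < x" "x \<le> 1" using l n_pos unfolding x_def by auto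
  have x1: "x powr ((r - 1) * (2 - \<alpha>)) \<le> 1" using x r_ge alpha_lt_1 by (intro powr_le1) auto
  have x2: "1 \<le> x powr (\<alpha> - 2)"
    using powr_mono'[of "\<alpha> - 2" 0 x] x alpha_lt_1 by simp
  have e: "x powr ((r - 1) * (2 - \<alpha>)) * x powr (r * (\<alpha> - 2)) = x powr (\<alpha> - 2)"
    using x by (simp add: powr_add[symmetric] algebra_simps)
  define P where "P = (r * T) powr (2 - \<alpha>) * real n powr (\<alpha> - 2)"
  have P0: "0 \<le> P" unfolding P_def by simp
  have "\<tau> (l - 1) powr (2 - \<alpha>) * (1 + tm (l - 1) powr (\<alpha> - 2))
      \<le> (P * x powr ((r - 1) * (2 - \<alpha>))) * (1 + 2 powr (r * (2 - \<alpha>)) * x powr (r * (\<alpha> - 2)) * T powr (\<alpha> - 2))"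
    using tau_last_powr_bound[of l] tm_prev_powr_bound[OF l] l unfolding P_def x_def
    by (intro mult_mono add_left_mono) (auto simp: ac_simps)
  also have "\<dots> = P * x powr ((r - 1) * (2 - \<alpha>)) + P * 2 powr (r * (2 - \<alpha>)) * T powr (\<alpha> - 2) * x powr (\<alpha> - 2)"
    using e by (simp add: algebra_simps)
  also have "\<dots> \<le> P * x powr (\<alpha> - 2) + P * 2 powr (r * (2 - \<alpha>)) * T powr (\<alpha> - 2) * x powr (\<alpha> - 2)"
    using x1 x2 P0 by (intro add_right_mono mult_left_mono) auto
  also have "\<dots> = (r * T) powr (2 - \<alpha>) * (1 + 2 powr (r * (2 - \<alpha>)) * T powr (\<alpha> - 2)) * (real n powr (\<alpha> - 2) * x powr (\<alpha> - 2))"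
    unfolding P_def by (simp add: algebra_simps)
  also have "\<dots> \<le> (r * T) powr (2 - \<alpha>) * (1 + 2 powr (r * (2 - \<alpha>)) * T powr (\<alpha> - 2)) * (T powr \<alpha> * (real n powr (- \<gamma>) * tm l powr (- \<alpha>)))"
    using grading_decay[of l] l unfolding x_def by (intro mult_left_mono) auto
  finally have main: "\<tau> (l - 1) powr (2 - \<alpha>) * (1 + tm (l - 1) powr (\<alpha> - 2))
      \<le> (r * T) powr (2 - \<alpha>) * (1 + 2 powr (r * (2 - \<alpha>)) * T powr (\<alpha> - 2)) * (T powr \<alpha> * (real n powr (- \<gamma>) * tm l powr (- \<alpha>)))" .
  have "\<bar>local_err l (l - 1)\<bar> \<le> C0 / (1 - \<alpha>) * (\<tau> (l - 1) powr (2 - \<alpha>) * (1 + tm (l - 1) powr (\<alpha> - 2)))"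
    using local_err_last[OF l] by (simp add: ac_simps)
  also have "\<dots> \<le> C0 / (1 - \<alpha>) * ((r * T) powr (2 - \<alpha>) * (1 + 2 powr (r * (2 - \<alpha>)) * T powr (\<alpha> - 2)) * (T powr \<alpha> * (real n powr (- \<gamma>) * tm l powr (- \<alpha>))))"
    using main C0_pos alpha_lt_1 by (intro mult_left_mono) auto
  also have "\<dots> = Kc * (real n powr (- \<gamma>) * tm l powr (- \<alpha>))"
    unfolding Kc_def by (simp add: field_simps)
  finally show ?thesis .
qed

definition "Kw = C0 * (r * 2 powr (r - 1) * T)^2 * (1 + T powr (\<alpha> - 2))"

lemma Kw_nonneg: "0 \<le> Kw" unfolding Kw_def using C0_pos by simp

lemma n_powr_minus_2: "real n powr (-2) = 1 / real n^2"
  using n_pos by (simp add: powr_minus_divide)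

lemma middle_weight_bound:
  assumes j: "1 \<le> j" "j < n"
  shows "\<tau> j ^ 2 * (C0 * (1 + tm j powr (\<alpha> - 2))) \<le> Kw * (real n powr (-2) * (real j / real n) powr (r * \<alpha> - 2))"
proof -
  define x where "x = real j / real n"
  have x: "0 < x" "x \<le> 1" using j n_pos unfolding x_def by auto
  define c1 where "c1 = r * 2 powr (r - 1) * T"
  have c1: "0 < c1" unfolding c1_def using r_ge T_pos by simp
  have ta1: "\<tau> j \<le> c1 * x powr (r - 1) / real n"
  proof -
    have "real (Suc j) powr (r - 1) \<le> (2 * real j) powr (r - 1)"
      using j r_ge by (intro powr_mono2) auto
    also have "\<dots> = 2 powr (r - 1) * real j powr (r - 1)" by (simp add: powr_mult)
    finally have A: "real (Suc j) powr (r - 1) \<le> 2 powr (r - 1) * real j powr (r - 1)" .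
    have "\<tau> j \<le> r * T * real (Suc j) powr (r - 1) / real n powr r" by (rule tau_upper)
    also have "\<dots> \<le> r * T * (2 powr (r - 1) * real j powr (r - 1)) / real n powr r"
      using A r_ge T_pos n_pos by (intro divide_right_mono mult_left_mono) auto
    also have "\<dots> = c1 * x powr (r - 1) / real n"
      unfolding c1_def x_def using n_pos by (simp add: powr_divide powr_diff field_simps)
    finally show ?thesis .
  qed
  have ta2: "\<tau> j ^ 2 \<le> c1^2 * x powr (2 * r - 2) / real n^2"
  proof -
    have "\<tau> j ^ 2 \<le> (c1 * x powr (r - 1) / real n) ^ 2"
      using ta1 tau_pos[of j] by (intro power_mono) auto
    also have "\<dots> = c1^2 * (x powr (r - 1) * x powr (r - 1)) / real n^2" by (simp add: power2_eq_square)
    also have "x powr (r - 1) * x powr (r - 1) = x powr (2 * r - 2)"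
      using x by (simp add: powr_add[symmetric])
    finally show ?thesis .
  qed
  have tmj: "tm j powr (\<alpha> - 2) = x powr (r * (\<alpha> - 2)) * T powr (\<alpha> - 2)"
    unfolding tm_powr x_def ..
  have e1: "x powr (2 * r - 2) * x powr (r * (\<alpha> - 2)) = x powr (r * \<alpha> - 2)"
    using x by (simp add: powr_add[symmetric] algebra_simps)
  have e2: "x powr (2 * r - 2) \<le> x powr (r * \<alpha> - 2)"
    using x alpha_lt_1 r_ge by (intro powr_mono') (auto simp: algebra_simps mult_left_le)
  have "\<tau> j ^ 2 * (C0 * (1 + tm j powr (\<alpha> - 2))) \<le> (c1^2 * x powr (2 * r - 2) / real n^2) * (C0 * (1 + tm j powr (\<alpha> - 2)))"
    using ta2 C0_pos by (intro mult_right_mono) auto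
  also have "\<dots> = C0 * c1^2 / real n^2 * (x powr (2 * r - 2) + T powr (\<alpha> - 2) * x powr (r * \<alpha> - 2))"
    unfolding tmj using e1 by (simp add: algebra_simps add_divide_distrib)
  also have "\<dots> \<le> C0 * c1^2 / real n^2 * (x powr (r * \<alpha> - 2) + T powr (\<alpha> - 2) * x powr (r * \<alpha> - 2))"
    using e2 C0_pos by (intro mult_left_mono add_right_mono) auto
  also have "\<dots> = Kw * (real n powr (-2) * x powr (r * \<alpha> - 2))"
    unfolding Kw_def c1_def n_powr_minus_2 by (simp add: algebra_simps add_divide_distrib)
  finally show ?thesis unfolding x_def .
qed

lemma kern_increment_nonneg:
  assumes "Suc j < l"
  shows "0 \<le> kern l (tm (Suc j)) - kern l (tm j)"
  using kern_mono[of "tm j" "tm (Suc j)" l] tm_mono[of j "Suc j"] tm_less[of "Suc j" l] assms by simp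

lemma local_err_middle_early:
  assumes j: "1 \<le> j" "Suc j < l" "l \<le> n"
  shows "\<bar>local_err l j\<bar> \<le> Kw * real n powr (- min (r * \<alpha>) 2) * (kern l (tm (Suc j)) - kern l (tm j))"
proof -
  have "\<tau> j ^ 2 * (C0 * (1 + tm j powr (\<alpha> - 2))) \<le> Kw * (real n powr (-2) * (real j / real n) powr (r * \<alpha> - 2))"
    by (rule middle_weight_bound) (use j in auto)
  also have "\<dots> \<le> Kw * real n powr (- min (r * \<alpha>) 2)"
    using powr_grading_bound[where N = "real n" and x = "real j / real n" and a = "r * \<alpha>" and b = 2] j n_pos Kw_nonneg
    by (intro mult_left_mono) auto
  finally have "\<tau> j ^ 2 * (C0 * (1 + tm j powr (\<alpha> - 2))) * (kern l (tm (Suc j)) - kern l (tm j))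
      \<le> Kw * real n powr (- min (r * \<alpha>) 2) * (kern l (tm (Suc j)) - kern l (tm j))"
    using kern_increment_nonneg[OF j(2)] by (rule mult_right_mono)
  with local_err_middle[OF j] show ?thesis by linarith
qed

lemma local_err_middle_late:
  assumes j: "1 \<le> j" "Suc j < l" "l \<le> n" "real l / 2 \<le> real j"
  shows "\<bar>local_err l j\<bar> \<le> Kw * 2 powr \<bar>r * \<alpha> - 2\<bar> * (real n powr (-2) * (real l / real n) powr (r * \<alpha> - 2))
                              * (kern l (tm (Suc j)) - kern l (tm j))"
proof -
  have "\<tau> j ^ 2 * (C0 * (1 + tm j powr (\<alpha> - 2))) \<le> Kw * (real n powr (-2) * (real j / real n) powr (r * \<alpha> - 2))"
    by (rule middle_weight_bound) (use j in auto)
  also have "\<dots> \<le> Kw * (real n powr (-2) * (2 powr \<bar>r * \<alpha> - 2\<bar> * (real l / real n) powr (r * \<alpha> - 2)))"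
  proof -
    have "real l / real n / 2 \<le> real j / real n" "real j / real n \<le> real l / real n"
      using divide_right_mono[OF j(4), of "real n"] j n_pos by (simp_all add: divide_right_mono mult.commute)
    then show ?thesis
      using powr_comparable_bound[of "real l / real n" "real j / real n" "r * \<alpha> - 2"] j n_pos Kw_nonneg
      by (intro mult_left_mono) auto
  qed
  finally have "\<tau> j ^ 2 * (C0 * (1 + tm j powr (\<alpha> - 2))) * (kern l (tm (Suc j)) - kern l (tm j))
      \<le> Kw * (real n powr (-2) * (2 powr \<bar>r * \<alpha> - 2\<bar> * (real l / real n) powr (r * \<alpha> - 2)))
          * (kern l (tm (Suc j)) - kern l (tm j))"
    using kern_increment_nonneg[OF j(2)] by (rule mult_right_mono)
  with local_err_middle[OF j(1-3)] show ?thesis by (simp add: ac_simps)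
qed

lemma sum_kern_increments_le:
  assumes "k < l"
  shows "(\<Sum>j\<in>{1..<k}. kern l (tm (Suc j)) - kern l (tm j)) \<le> kern l (tm k)"
proof -
  have "(\<Sum>j\<in>{1..<k}. kern l (tm (Suc j)) - kern l (tm j)) \<le> (\<Sum>j<k. kern l (tm (Suc j)) - kern l (tm j))"
    by (rule sum_mono2) (use assms tm_mono tm_less in \<open>auto intro!: kern_mono\<close>)
  also have "\<dots> = kern l (tm k) - kern l (tm 0)" by (rule sum_lessThan_telescope)
  finally show ?thesis using kern_nonneg[of l "tm 0"] by simp
qed

lemma kern_at_midpoint_le:
  assumes l: "2 \<le> l" "l \<le> n"
  shows "kern l (tm ((l + 1) div 2)) \<le> 4 powr \<alpha> * tm l powr (- \<alpha>)"
proof -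
  define m where "m = (l + 1) div 2"
  have tl: "0 < tm l" using tm_pos l by simp
  have ml: "real m / real l \<le> 3 / 4" using l unfolding m_def by (auto simp: field_simps)
  have "tm m = (real m / real l) powr r * tm l"
    unfolding tm_x using n_pos l by (simp add: powr_divide)
  also have "\<dots> \<le> (real m / real l) * tm l"
    using powr_mono'[of 1 r "real m / real l"] r_ge ml tl by (intro mult_right_mono) auto
  also have "\<dots> \<le> 3 / 4 * tm l" using ml tl by (intro mult_right_mono) auto
  finally have "tm l / 4 \<le> tm l - tm m" by simp
  then have "kern l (tm m) \<le> (tm l / 4) powr (- \<alpha>)" unfolding kern_def
    using tl alpha_pos by (intro powr_mono2') auto
  also have "\<dots> = 4 powr \<alpha> * tm l powr (- \<alpha>)"
    using tl by (simp add: powr_divide powr_minus_divide field_simps)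
  finally show ?thesis unfolding m_def .
qed

lemma kern_at_last_le:
  assumes l: "1 \<le> l" "l \<le> n"
  shows "kern l (tm (l - 1)) \<le> T powr (- \<alpha>) * (real l / real n) powr (- ((r - 1) * \<alpha>)) * real n powr \<alpha>"
proof -
  define x where "x = real l / real n"
  have x: "0 < x" using l n_pos unfolding x_def by auto
  have "T * real l powr (r - 1) / real n powr r \<le> \<tau> (l - 1)" using tau_prev_lower l by simp
  moreover have "T * real l powr (r - 1) / real n powr r = T * x powr (r - 1) / real n"
    unfolding x_def using n_pos by (simp add: powr_divide powr_diff field_simps)
  ultimately have lb: "T * x powr (r - 1) / real n \<le> \<tau> (l - 1)" by simp
  have "kern l (tm (l - 1)) = \<tau> (l - 1) powr (- \<alpha>)" unfolding kern_def tau_def using l by simp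
  also have "\<dots> \<le> (T * x powr (r - 1) / real n) powr (- \<alpha>)"
    using lb T_pos x n_pos alpha_pos by (intro powr_mono2') auto
  also have "\<dots> = T powr (- \<alpha>) * x powr (- ((r - 1) * \<alpha>)) * real n powr \<alpha>"
    using T_pos x n_pos
      by (simp add: powr_mult powr_divide powr_powr powr_minus_divide divide_inverse inverse_powr powr_minus)
  finally show ?thesis unfolding x_def .
qed

lemma kern_at_midpoint_decay:
  assumes l: "2 \<le> l" "l \<le> n"
  shows "real n powr (- min (r * \<alpha>) 2) * kern l (tm ((l + 1) div 2))
         \<le> 4 powr \<alpha> * (real n powr (- \<gamma>) * tm l powr (- \<alpha>))"
proof -
  have "real n powr (- min (r * \<alpha>) 2) \<le> real n powr (- \<gamma>)"
    using n_ge alpha_pos by (intro powr_mono) auto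
  then have "real n powr (- min (r * \<alpha>) 2) * kern l (tm ((l + 1) div 2))
      \<le> real n powr (- \<gamma>) * (4 powr \<alpha> * tm l powr (- \<alpha>))"
    using kern_at_midpoint_le[OF l] kern_nonneg by (intro mult_mono) auto
  then show ?thesis by (simp add: ac_simps)
qed

lemma kern_at_last_decay:
  assumes l: "1 \<le> l" "l \<le> n"
  shows "real n powr (-2) * (real l / real n) powr (r * \<alpha> - 2) * kern l (tm (l - 1))
         \<le> real n powr (- \<gamma>) * tm l powr (- \<alpha>)"
proof -
  define x where "x = real l / real n"
  have x: "0 < x" using l n_pos unfolding x_def by auto
  have "real n powr (-2) * x powr (r * \<alpha> - 2) * kern l (tm (l - 1))
      \<le> real n powr (-2) * x powr (r * \<alpha> - 2) * (T powr (- \<alpha>) * x powr (- ((r - 1) * \<alpha>)) * real n powr \<alpha>)"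
    using kern_at_last_le[OF l] unfolding x_def by (intro mult_left_mono) auto
  also have "\<dots> = T powr (- \<alpha>) * (real n powr (\<alpha> - 2) * x powr (\<alpha> - 2))"
    using x by (simp add: powr_add[symmetric] algebra_simps)
  also have "\<dots> \<le> T powr (- \<alpha>) * (T powr \<alpha> * (real n powr (- \<gamma>) * tm l powr (- \<alpha>)))"
    using grading_decay[OF l] unfolding x_def by (intro mult_left_mono) auto
  also have "\<dots> = real n powr (- \<gamma>) * tm l powr (- \<alpha>)"
    using T_pos by (simp add: powr_minus field_simps)
  finally show ?thesis unfolding x_def .
qed

definition "Kd = Kw * (4 powr \<alpha> + 2 powr \<bar>r * \<alpha> - 2\<bar>)"

text \<open>Up to the middle of [0, t_l] the factors t_j^(alpha - 2) are compensated by the grading; beyond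
  it they are comparable to t_l^(alpha - 2). In both ranges the kernel increments telescope.\<close>

lemma local_err_middle_decay:
  assumes l: "2 \<le> l" "l \<le> n"
  shows "(\<Sum>j\<in>{1..<l - 1}. \<bar>local_err l j\<bar>) \<le> Kd * (real n powr (- \<gamma>) * tm l powr (- \<alpha>))"
proof -
  define u where "u j = kern l (tm (Suc j)) - kern l (tm j)" for j
  define m where "m = (l + 1) div 2"
  define X where "X = Kw * real n powr (- min (r * \<alpha>) 2)"
  define Z where "Z = Kw * 2 powr \<bar>r * \<alpha> - 2\<bar> * (real n powr (-2) * (real l / real n) powr (r * \<alpha> - 2))"
  have X0: "0 \<le> X" "0 \<le> Z" unfolding X_def Z_def using Kw_nonneg by auto
  have u0: "0 \<le> u j" if "j < l - 1" for j
    unfolding u_def using that by (intro kern_mono[THEN diff_ge_0_iff_ge[THEN iffD2]] tm_mono tm_less) auto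
  have m: "m \<le> l - 1" using l unfolding m_def by auto
  have "\<bar>local_err l j\<bar> \<le> X * (if j < m then u j else 0) + Z * u j" if j: "j \<in> {1..<l - 1}" for j
  proof (cases "j < m")
    case True
    have "\<bar>local_err l j\<bar> \<le> X * u j"
      using local_err_middle_early[of j l] j l unfolding X_def u_def by auto
    moreover have "0 \<le> Z * u j" using X0 u0[of j] j by auto
    ultimately show ?thesis using True by simp
  next
    case False
    then have "real l / 2 \<le> real j" unfolding m_def by linarith
    then show ?thesis using local_err_middle_late[of j l] j l False unfolding Z_def u_def by simp
  qed
  then have "(\<Sum>j\<in>{1..<l - 1}. \<bar>local_err l j\<bar>) \<le> (\<Sum>j\<in>{1..<l - 1}. X * (if j < m then u j else 0) + Z * u j)"
    by (rule sum_mono)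
  also have "\<dots> = X * (\<Sum>j\<in>{1..<m}. u j) + Z * (\<Sum>j\<in>{1..<l - 1}. u j)"
  proof -
    have "(\<Sum>j\<in>{1..<l - 1}. if j < m then u j else 0) = (\<Sum>j\<in>{j \<in> {1..<l - 1}. j < m}. u j)"
      by (rule sum.inter_filter[symmetric]) simp
    also have "{j \<in> {1..<l - 1}. j < m} = {1..<m}" using m by auto
    finally show ?thesis by (simp add: sum.distrib flip: sum_distrib_left)
  qed
  also have "\<dots> \<le> X * kern l (tm m) + Z * kern l (tm (l - 1))"
    using sum_kern_increments_le[of m l] sum_kern_increments_le[of "l - 1" l] m l X0
    unfolding u_def by (intro add_mono mult_left_mono) auto
  also have "\<dots> \<le> Kw * 4 powr \<alpha> * (real n powr (- \<gamma>) * tm l powr (- \<alpha>))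
      + Kw * 2 powr \<bar>r * \<alpha> - 2\<bar> * (real n powr (- \<gamma>) * tm l powr (- \<alpha>))"
    using kern_at_midpoint_decay[OF l] kern_at_last_decay[of l] l Kw_nonneg
    unfolding X_def Z_def m_def by (intro add_mono) (simp_all add: mult.assoc mult_left_mono)
  finally show ?thesis unfolding Kd_def by (simp add: algebra_simps)
qed

definition "Kt = Ka * T powr \<alpha> + Kb + Kc + Kd"

lemma truncation_consts_nonneg: "0 \<le> Ka" "0 \<le> Kb" "0 \<le> Kc" "0 \<le> Kd"
  unfolding Ka_def Kb_def Kc_def Kd_def using C0_pos alpha_pos alpha_lt_1 T_pos Kw_nonneg r_ge
  by (auto intro!: mult_nonneg_nonneg add_nonneg_nonneg divide_nonneg_pos)

lemma sum_local_err_bound: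
  assumes l: "1 \<le> l" "l \<le> n"
  shows "\<bar>\<Sum>j<l. local_err l j\<bar> \<le> Kt * (real n powr (- \<gamma>) * tm l powr (- \<alpha>))"
proof -
  define F where "F = real n powr (- \<gamma>) * tm l powr (- \<alpha>)"
  have F0: "0 \<le> F" unfolding F_def by simp
  show ?thesis
  proof (cases "l = 1")
    case True
    then have "\<bar>\<Sum>j<l. local_err l j\<bar> \<le> Ka * T powr \<alpha> * F" unfolding F_def
      using local_err_first_step_decay by simp
    also have "\<dots> \<le> Kt * F" unfolding Kt_def using truncation_consts_nonneg F0
      by (intro mult_right_mono) auto
    finally show ?thesis unfolding F_def .
  next
    case False
    then have l2: "2 \<le> l" using l by simp
    have set: "{..<l} = insert 0 (insert (l - 1) {1..<l - 1})" using l2 by auto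
    have "(\<Sum>j<l. local_err l j) = local_err l 0 + (local_err l (l - 1) + (\<Sum>j\<in>{1..<l - 1}. local_err l j))"
      unfolding set using l2 by (subst sum.insert) auto
    moreover have "\<bar>\<Sum>j\<in>{1..<l - 1}. local_err l j\<bar> \<le> (\<Sum>j\<in>{1..<l - 1}. \<bar>local_err l j\<bar>)"
      by (rule sum_abs)
    ultimately have "\<bar>\<Sum>j<l. local_err l j\<bar> \<le> \<bar>local_err l 0\<bar> + \<bar>local_err l (l - 1)\<bar> + (\<Sum>j\<in>{1..<l - 1}. \<bar>local_err l j\<bar>)"
      by linarith
    also have "\<dots> \<le> Kb * F + Kc * F + Kd * F"
      using local_err_first_decay[OF l2 l(2)] local_err_last_decay[OF l2 l(2)] local_err_middle_decay[OF l2 l(2)]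
        unfolding F_def
      by (intro add_mono) auto
    also have "\<dots> \<le> Kt * F"
    proof -
      have "0 \<le> Ka * T powr \<alpha> * F" using truncation_consts_nonneg F0 by simp
      then show ?thesis unfolding Kt_def by (simp add: distrib_right)
    qed
    finally show ?thesis unfolding F_def .
  qed
qed

lemma l1_truncation_error_bound:
  assumes l: "1 \<le> l" "l \<le> n"
  shows "\<bar>(\<Sum>j<l. l1_weight \<alpha> l j * (Y (tm (Suc j)) - Y (tm j))) - integral {0..tm l} (\<lambda>s. (tm l - s) powr (- \<alpha>) * Y' s) / Gamma (1 - \<alpha>)\<bar>
     \<le> Kt / Gamma (1 - \<alpha>) * (real n powr (- \<gamma>) * tm l powr (- \<alpha>))"
  unfolding l1_truncation_eq_sum_local_err[OF l] using sum_local_err_bound[OF l] Gamma_1_minus_pos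
  by (simp add: divide_right_mono)

end

lemma L2_set_le_sqrt_card:
  fixes f :: "'a \<Rightarrow> real"
  assumes "finite A" "0 \<le> B" "\<And>i. i \<in> A \<Longrightarrow> \<bar>f i\<bar> \<le> B"
  shows "L2_set f A \<le> sqrt (real (card A)) * B"
proof -
  have "(\<Sum>i\<in>A. (f i)^2) \<le> (\<Sum>i\<in>A. B^2)"
  proof (rule sum_mono)
    fix i assume "i \<in> A"
    then have "\<bar>f i\<bar>^2 \<le> B^2" using assms by (intro power_mono) auto
    then show "(f i)^2 \<le> B^2" by simp
  qed
  then have "L2_set f A \<le> sqrt (real (card A) * B^2)" unfolding L2_set_def by simp
  also have "\<dots> = sqrt (real (card A)) * B" using assms by (simp add: real_sqrt_mult)
  finally show ?thesis .
qed

lemma Max_abs_le_L2_set: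
  fixes e :: "'a \<Rightarrow> real"
  assumes "finite A" "A \<noteq> {}"
  shows "Max ((\<lambda>i. \<bar>e i\<bar>) ` A) \<le> L2_set e A"
proof -
  have "L2_set (\<lambda>i. \<bar>e i\<bar>) A = L2_set e A" unfolding L2_set_def by simp
  then have "\<bar>e i\<bar> \<le> L2_set e A" if "i \<in> A" for i
    using member_le_L2_set[OF assms(1) that, of "\<lambda>i. \<bar>e i\<bar>"] by simp
  then show ?thesis using assms by simp
qed

lemma (in graded_mesh) scheme_solution_l1_form:
  assumes "\<alpha> < 1" and sch: "is_scheme_solution \<alpha> lam v D T L r f g n K Y"
    and i: "i \<in> {1..K-1}" and l: "l \<in> {1..n}"
  defines "h \<equiv> L / real K"
  shows "(\<Sum>j<l. l1_weight \<alpha> l j * (Y i (Suc j) - Y i j))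
         = - v * (Y (i+1) l - Y (i-1) l) / (2 * h) + D * (Y (i+1) l - 2 * Y i l + Y (i-1) l) / h^2
           + exp (lam * tm l) * f (real i * h) (tm l)"
proof -
  have "(\<Sum>j<l. l1_weight \<alpha> l j * (Y i (Suc j) - Y i j))
      = (1 / Gamma (2 - \<alpha>)) * (\<Sum>j<l. \<tau> j powr (-\<alpha>) * acoef \<alpha> r j l * (Y i (Suc j) - Y i j))"
    unfolding sum_distrib_left
  proof (rule sum.cong)
    fix j assume "j \<in> {..<l}"
    then have coeff: "\<tau> j powr (- \<alpha>) * acoef \<alpha> r j l / Gamma (2 - \<alpha>) = l1_weight \<alpha> l j"
      by (intro l1_weight_eq_scheme_coeff assms(1)) simp
    show "l1_weight \<alpha> l j * (Y i (Suc j) - Y i j)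
        = 1 / Gamma (2 - \<alpha>) * (\<tau> j powr (- \<alpha>) * acoef \<alpha> r j l * (Y i (Suc j) - Y i j))"
      by (simp flip: coeff)
  qed simp
  with sch i l show ?thesis unfolding is_scheme_solution_def Let_def h_def by auto
qed

locale fde_solution =
  fixes \<alpha> lam v D T L r C0 M3 M4 :: real
    and f :: "real \<Rightarrow> real \<Rightarrow> real" and g :: "real \<Rightarrow> real"
    and y yt ytt y1 y2 y3 y4 :: "real \<Rightarrow> real \<Rightarrow> real"
  assumes alpha_pos: "0 < \<alpha>" and alpha_lt_1: "\<alpha> < 1" and v_pos: "0 < v" and D_pos: "0 < D"
    and T_pos: "0 < T" and L_pos: "0 < L" and r_ge: "1 \<le> r"
    and y_cont: "continuous_on ({0..L} \<times> {0..T}) (\<lambda>(x, t). y x t)"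
    and y_t: "\<And>x t. x \<in> {0..L} \<Longrightarrow> t \<in> {0<..T} \<Longrightarrow>
               ((\<lambda>s. y x s) has_real_derivative yt x t) (at t within {0..T})"
    and y_tt: "\<And>x t. x \<in> {0..L} \<Longrightarrow> t \<in> {0<..T} \<Longrightarrow>
               ((\<lambda>s. yt x s) has_real_derivative ytt x t) (at t within {0..T})"
    and y_x1: "\<And>x t. x \<in> {0..L} \<Longrightarrow> t \<in> {0..T} \<Longrightarrow>
               ((\<lambda>z. y z t) has_real_derivative y1 x t) (at x within {0..L})"
    and y_x2: "\<And>x t. x \<in> {0..L} \<Longrightarrow> t \<in> {0..T} \<Longrightarrow>
               ((\<lambda>z. y1 z t) has_real_derivative y2 x t) (at x within {0..L})"
    and y_x3: "\<And>x t. x \<in> {0..L} \<Longrightarrow> t \<in> {0..T} \<Longrightarrow>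
               ((\<lambda>z. y2 z t) has_real_derivative y3 x t) (at x within {0..L})"
    and y_x4: "\<And>x t. x \<in> {0..L} \<Longrightarrow> t \<in> {0..T} \<Longrightarrow>
               ((\<lambda>z. y3 z t) has_real_derivative y4 x t) (at x within {0..L})"
    and C0_pos: "0 < C0"
    and yt_bound: "\<And>x t. x \<in> {0..L} \<Longrightarrow> t \<in> {0<..T} \<Longrightarrow> \<bar>yt x t\<bar> \<le> C0 * (1 + t powr (\<alpha> - 1))"
    and ytt_bound: "\<And>x t. x \<in> {0..L} \<Longrightarrow> t \<in> {0<..T} \<Longrightarrow> \<bar>ytt x t\<bar> \<le> C0 * (1 + t powr (\<alpha> - 2))"
    and y3_bound: "\<And>x t. x \<in> {0..L} \<Longrightarrow> t \<in> {0..T} \<Longrightarrow> \<bar>y3 x t\<bar> \<le> M3"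
    and y4_bound: "\<And>x t. x \<in> {0..L} \<Longrightarrow> t \<in> {0..T} \<Longrightarrow> \<bar>y4 x t\<bar> \<le> M4"
    and pde_int: "\<And>x t. x \<in> {0<..<L} \<Longrightarrow> t \<in> {0<..T} \<Longrightarrow>
               (\<lambda>s. (t - s) powr (-\<alpha>) * yt x s) integrable_on {0..t}"
    and pde: "\<And>x t. x \<in> {0<..<L} \<Longrightarrow> t \<in> {0<..T} \<Longrightarrow>
               caputo \<alpha> (\<lambda>s. yt x s) t = - v * y1 x t + D * y2 x t + exp (lam * t) * f x t"
    and init: "\<And>x. x \<in> {0..L} \<Longrightarrow> y x 0 = g x"
    and bdry: "\<And>t. t \<in> {0..T} \<Longrightarrow> y 0 t = 0 \<and> y L t = 0"
begin

abbreviation "Ct \<equiv> l1_truncation.Kt T r \<alpha> C0"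

definition "Cx = v * M3 + 2 * D * M4"

lemma Cx_nonneg: "0 \<le> Cx"
  unfolding Cx_def using y3_bound[of 0 0] y4_bound[of 0 0] v_pos D_pos L_pos T_pos by simp

definition "err n K Y i l = y (real i * (L / real K)) (tmesh T r n l) - Y i l"

definition "resid n K Y i l =
  (\<Sum>j<l. graded_mesh.l1_weight T r n \<alpha> l j * (err n K Y i (Suc j) - err n K Y i j))
  - (- v * (err n K Y (i+1) l - err n K Y (i-1) l) / (2 * (L / real K))
     + D * (err n K Y (i+1) l - 2 * err n K Y i l + err n K Y (i-1) l) / (L / real K)^2)"

lemma l1_truncation_at:
  assumes x: "x \<in> {0<..<L}" and n: "1 \<le> n"
  shows "l1_truncation T r n \<alpha> C0 (y x) (yt x) (ytt x)"
proof
  show "0 < T" "1 \<le> r" "1 \<le> n" "0 < \<alpha>" "\<alpha> < 1" "0 < C0"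
    using T_pos r_ge n alpha_pos alpha_lt_1 C0_pos by auto
  have xl: "x \<in> {0..L}" using x by auto
  have "continuous_on {0..T} (\<lambda>t. (\<lambda>(x, t). y x t) (x, t))"
    by (rule continuous_on_compose2[OF y_cont]) (use xl in \<open>auto intro!: continuous_intros\<close>)
  then show "continuous_on {0..T} (y x)" by simp
  fix s assume s: "s \<in> {0<..T}"
  show "(y x has_real_derivative yt x s) (at s within {0..T})" using y_t[OF xl s] by simp
  show "(yt x has_real_derivative ytt x s) (at s within {0..T})" using y_tt[OF xl s] by simp
  show "\<bar>yt x s\<bar> \<le> C0 * (1 + s powr (\<alpha> - 1))" using yt_bound[OF xl s] .
  show "\<bar>ytt x s\<bar> \<le> C0 * (1 + s powr (\<alpha> - 2))" using ytt_bound[OF xl s] .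
next
  fix t assume t: "t \<in> {0<..T}"
  show "(\<lambda>s. (t - s) powr (- \<alpha>) * yt x s) integrable_on {0..t}" using pde_int[OF x t] .
qed

lemma exact_solution_l1_residual:
  assumes x: "x \<in> {0<..<L}" and n: "1 \<le> n" and l: "l \<in> {1..n}"
  defines "t \<equiv> tmesh T r n l"
  shows "\<bar>(\<Sum>j<l. graded_mesh.l1_weight T r n \<alpha> l j * (y x (tmesh T r n (Suc j)) - y x (tmesh T r n j)))
            - (- v * y1 x t + D * y2 x t + exp (lam * t) * f x t)\<bar>
         \<le> \<bar>Ct\<bar> / Gamma (1 - \<alpha>) * (real n powr (- min (2 - \<alpha>) (r * \<alpha>)) * t powr (- \<alpha>))"
proof -
  interpret l1_truncation T r n \<alpha> C0 "y x" "yt x" "ytt x" by (rule l1_truncation_at[OF x n])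
  have "t \<in> {0<..T}" unfolding t_def using tm_pos tm_le_T l by auto
  then have "integral {0..t} (\<lambda>s. (t - s) powr (- \<alpha>) * yt x s) / Gamma (1 - \<alpha>)
      = - v * y1 x t + D * y2 x t + exp (lam * t) * f x t"
    using pde[OF x] unfolding caputo_def by simp
  then have "\<bar>(\<Sum>j<l. l1_weight \<alpha> l j * (y x (tm (Suc j)) - y x (tm j)))
            - (- v * y1 x t + D * y2 x t + exp (lam * t) * f x t)\<bar>
         \<le> Kt / Gamma (1 - \<alpha>) * (real n powr (- \<gamma>) * t powr (- \<alpha>))"
    using l1_truncation_error_bound[of l] l unfolding t_def by auto
  also have "\<dots> \<le> \<bar>Ct\<bar> / Gamma (1 - \<alpha>) * (real n powr (- \<gamma>) * t powr (- \<alpha>))"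
    using Gamma_1_minus_pos by (intro mult_right_mono divide_right_mono) auto
  finally show ?thesis .
qed

lemma central_differences_at:
  assumes t: "t \<in> {0..T}" and xs: "0 \<le> x - h" "x + h \<le> L" "0 < h"
  shows "\<bar>(y (x + h) t - y (x - h) t) / (2 * h) - y1 x t\<bar> \<le> M3 * h^2"
    and "\<bar>(y (x + h) t - 2 * y x t + y (x - h) t) / h^2 - y2 x t\<bar> \<le> 2 * M4 * h^2"
proof -
  have d1: "\<And>z. z \<in> {0..L} \<Longrightarrow> ((\<lambda>z. y z t) has_real_derivative y1 z t) (at z within {0..L})"
   and d2: "\<And>z. z \<in> {0..L} \<Longrightarrow> ((\<lambda>z. y1 z t) has_real_derivative y2 z t) (at z within {0..L})"
   and d3: "\<And>z. z \<in> {0..L} \<Longrightarrow> ((\<lambda>z. y2 z t) has_real_derivative y3 z t) (at z within {0..L})"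
   and d4: "\<And>z. z \<in> {0..L} \<Longrightarrow> ((\<lambda>z. y3 z t) has_real_derivative y4 z t) (at z within {0..L})"
    using y_x1 y_x2 y_x3 y_x4 t by auto
  show "\<bar>(y (x + h) t - y (x - h) t) / (2 * h) - y1 x t\<bar> \<le> M3 * h^2"
    using central_difference_error[OF d1 d2 d3 _ xs] y3_bound t by auto
  show "\<bar>(y (x + h) t - 2 * y x t + y (x - h) t) / h^2 - y2 x t\<bar> \<le> 2 * M4 * h^2"
    using second_central_difference_error[OF d1 d2 d3 d4 _ xs] y4_bound t by auto
qed

lemma resid_bound:
  assumes n: "1 \<le> n" and K: "2 \<le> K"
    and sch: "is_scheme_solution \<alpha> lam v D T L r f g n K Y"
    and i: "i \<in> {1..K-1}" and l: "l \<in> {1..n}"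
  shows "\<bar>resid n K Y i l\<bar>
         \<le> \<bar>Ct\<bar> / Gamma (1 - \<alpha>) * (real n powr (- min (2 - \<alpha>) (r * \<alpha>)) * tmesh T r n l powr (- \<alpha>))
           + Cx * (L / real K)^2"
proof -
  interpret graded_mesh T r n using T_pos r_ge n by unfold_locales
  define h where "h = L / real K"
  define x where "x = real i * h"
  define t where "t = tm l"
  have h: "0 < h" "real K * h = L" unfolding h_def using L_pos K by auto
  have "1 \<le> real i" "real i + 1 \<le> real K" using i K by auto
  then have "1 * h \<le> real i * h" "(real i + 1) * h \<le> real K * h"
    using h by (intro mult_right_mono; simp)+
  then have x: "0 < x" "x < L" "0 \<le> x - h" "x + h \<le> L"
    using h unfolding x_def by (auto simp: algebra_simps)
  have grid: "real (i + 1) * h = x + h" "real (i - 1) * h = x - h"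
    unfolding x_def using i by (auto simp: algebra_simps of_nat_diff)
  have t: "t \<in> {0..T}" unfolding t_def using tm_nonneg tm_le_T l by auto
  define TE where "TE = (\<Sum>j<l. l1_weight \<alpha> l j * (y x (tm (Suc j)) - y x (tm j)))
                         - (- v * y1 x t + D * y2 x t + exp (lam * t) * f x t)"
  define cd1 where "cd1 = (y (x + h) t - y (x - h) t) / (2 * h) - y1 x t"
  define cd2 where "cd2 = (y (x + h) t - 2 * y x t + y (x - h) t) / h^2 - y2 x t"
  have split: "(\<Sum>j<l. l1_weight \<alpha> l j * (err n K Y i (Suc j) - err n K Y i j))
      = (\<Sum>j<l. l1_weight \<alpha> l j * (y x (tm (Suc j)) - y x (tm j)))
        - (\<Sum>j<l. l1_weight \<alpha> l j * (Y i (Suc j) - Y i j))"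
    unfolding err_def x_def h_def by (simp add: sum_subtractf[symmetric] algebra_simps)
  have scheme: "(\<Sum>j<l. l1_weight \<alpha> l j * (Y i (Suc j) - Y i j))
      = - v * (Y (i+1) l - Y (i-1) l) / (2 * h) + D * (Y (i+1) l - 2 * Y i l + Y (i-1) l) / h^2
        + exp (lam * t) * f x t"
    using scheme_solution_l1_form[OF alpha_lt_1 sch i l] unfolding h_def x_def t_def .
  have at_grid: "err n K Y (i+1) l = y (x + h) t - Y (i+1) l" "err n K Y (i-1) l = y (x - h) t - Y (i-1) l"
      "err n K Y i l = y x t - Y i l"
    unfolding err_def h_def[symmetric] grid x_def t_def by simp_all
  have "resid n K Y i l = TE + v * cd1 - D * cd2"
    unfolding resid_def split scheme at_grid h_def[symmetric] TE_def cd1_def cd2_def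
    by (simp add: diff_divide_distrib add_divide_distrib algebra_simps)
  then have "\<bar>resid n K Y i l\<bar> \<le> \<bar>TE\<bar> + v * \<bar>cd1\<bar> + D * \<bar>cd2\<bar>"
    using v_pos D_pos abs_triangle_ineq4[of "TE + v * cd1" "D * cd2"] abs_triangle_ineq[of TE "v * cd1"]
    by (simp add: abs_mult)
  also have "\<dots> \<le> \<bar>Ct\<bar> / Gamma (1 - \<alpha>) * (real n powr (- min (2 - \<alpha>) (r * \<alpha>)) * t powr (- \<alpha>))
                 + v * (M3 * h^2) + D * (2 * M4 * h^2)"
    using exact_solution_l1_residual[of x n l] central_differences_at[OF t x(3,4) h(1)] x n l v_pos D_pos
    unfolding TE_def cd1_def cd2_def t_def by (intro add_mono mult_left_mono) auto
  finally show ?thesis unfolding Cx_def h_def t_def by (simp add: algebra_simps)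
qed

end

context fde_solution begin

lemma err_initial:
  assumes sch: "is_scheme_solution \<alpha> lam v D T L r f g n K Y" and i: "i \<le> K" and K: "1 \<le> K"
  shows "err n K Y i 0 = 0"
proof -
  have "real i * (L / real K) \<le> real K * (L / real K)" using i L_pos by (intro mult_right_mono) auto
  then have "real i * (L / real K) \<in> {0..L}" using K L_pos by auto
  moreover have "Y i 0 = g (real i * (L / real K))"
    using sch i unfolding is_scheme_solution_def Let_def by auto
  moreover have "tmesh T r n 0 = 0" unfolding tmesh_def using r_ge by simp
  ultimately show ?thesis unfolding err_def using init by simp
qed

lemma err_boundary:
  assumes sch: "is_scheme_solution \<alpha> lam v D T L r f g n K Y" and l: "l \<in> {1..n}" and K: "1 \<le> K"
  shows "err n K Y 0 l = 0" "err n K Y K l = 0"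
proof -
  interpret graded_mesh T r n using T_pos r_ge l by unfold_locales auto
  have "tm l \<in> {0..T}" using tm_nonneg tm_le_T l by auto
  moreover have "Y 0 l = 0" "Y K l = 0" using sch l unfolding is_scheme_solution_def Let_def by auto
  ultimately show "err n K Y 0 l = 0" "err n K Y K l = 0" unfolding err_def using bdry K by auto
qed

lemma err_scheme_eq:
  "(\<Sum>j<l. graded_mesh.l1_weight T r n \<alpha> l j * (err n K Y i (Suc j) - err n K Y i j))
   = - v * (err n K Y (i+1) l - err n K Y (i-1) l) / (2 * (L / real K))
     + D * (err n K Y (i+1) l - 2 * err n K Y i l + err n K Y (i-1) l) / (L / real K)^2
     + resid n K Y i l"
  unfolding resid_def by simp

definition "W n K = \<bar>Ct\<bar> * real n powr (- min (2 - \<alpha>) (r * \<alpha>)) + Gamma (1 - \<alpha>) * T powr \<alpha> * Cx * (L / real K)^2"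

lemma W_nonneg: "0 \<le> W n K"
  unfolding W_def using Cx_nonneg alpha_lt_1 by simp

lemma resid_le_first_weight:
  assumes n: "1 \<le> n" and K: "2 \<le> K"
    and sch: "is_scheme_solution \<alpha> lam v D T L r f g n K Y"
    and i: "i \<in> {1..K-1}" and l: "l \<in> {1..n}"
  shows "\<bar>resid n K Y i l\<bar> \<le> graded_mesh.l1_weight T r n \<alpha> l 0 * W n K"
proof -
  interpret graded_mesh T r n using T_pos r_ge n by unfold_locales
  define G where "G = Gamma (1 - \<alpha>)"
  have G: "0 < G" unfolding G_def using alpha_lt_1 by simp
  have "\<bar>Ct\<bar> / G * (real n powr (- min (2 - \<alpha>) (r * \<alpha>)) * tm l powr (- \<alpha>))
      = \<bar>Ct\<bar> * real n powr (- min (2 - \<alpha>) (r * \<alpha>)) * (tm l powr (- \<alpha>) / G)"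
    by simp
  also have "\<dots> \<le> \<bar>Ct\<bar> * real n powr (- min (2 - \<alpha>) (r * \<alpha>)) * l1_weight \<alpha> l 0"
    using l1_weight_lower[OF alpha_pos alpha_lt_1, of 0 l] l unfolding G_def by (intro mult_left_mono) auto
  finally have time: "\<bar>Ct\<bar> / G * (real n powr (- min (2 - \<alpha>) (r * \<alpha>)) * tm l powr (- \<alpha>))
      \<le> \<bar>Ct\<bar> * real n powr (- min (2 - \<alpha>) (r * \<alpha>)) * l1_weight \<alpha> l 0" .
  have "Cx * (L / real K)^2 = G * T powr \<alpha> * Cx * (L / real K)^2 * (T powr (- \<alpha>) / G)"
    using G T_pos by (simp add: powr_minus field_simps)
  also have "\<dots> \<le> G * T powr \<alpha> * Cx * (L / real K)^2 * l1_weight \<alpha> l 0"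
    using l1_weight_first_lower[OF alpha_pos alpha_lt_1, of l] l G Cx_nonneg unfolding G_def
    by (intro mult_left_mono) auto
  finally have space: "Cx * (L / real K)^2 \<le> G * T powr \<alpha> * Cx * (L / real K)^2 * l1_weight \<alpha> l 0" .
  show ?thesis
    using resid_bound[OF n K sch i l] time space unfolding W_def G_def by (simp add: algebra_simps)
qed

lemma max_err_le_W_small_peclet:
  assumes n: "1 \<le> n" and K: "2 \<le> K" and sch: "is_scheme_solution \<alpha> lam v D T L r f g n K Y"
    and fine: "v * (L / real K) \<le> 2 * D" and l: "l \<in> {1..n}"
  shows "Max ((\<lambda>i. \<bar>err n K Y i l\<bar>) ` {1..K-1}) \<le> W n K"
proof -
  interpret graded_mesh T r n using T_pos r_ge n by unfold_locales
  have h: "0 < L / real K" using L_pos K by simp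
  show ?thesis
  proof (rule l1_discrete_comparison[where b = "l1_weight \<alpha>" and n = n and l = l
        and E = "\<lambda>l. Max ((\<lambda>i. \<bar>err n K Y i l\<bar>) ` {1..K-1})"
        and P = "\<lambda>l. Max ((\<lambda>i. \<bar>resid n K Y i l\<bar>) ` {1..K-1})"])
    fix l assume l: "1 \<le> l" "l \<le> n"
    show "l1_weight \<alpha> l (l - 1) * Max ((\<lambda>i. \<bar>err n K Y i l\<bar>) ` {1..K-1})
        \<le> (\<Sum>j\<in>{1..<l}. (l1_weight \<alpha> l j - l1_weight \<alpha> l (j - 1)) * Max ((\<lambda>i. \<bar>err n K Y i j\<bar>) ` {1..K-1}))
          + Max ((\<lambda>i. \<bar>resid n K Y i l\<bar>) ` {1..K-1})"
      using l1_weight_mono[OF alpha_pos alpha_lt_1] err_initial[OF sch] err_boundary[OF sch, of l] err_scheme_eq l K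
      by (intro max_norm_stability[OF K h D_pos v_pos fine l(1)]) auto
    show "Max ((\<lambda>i. \<bar>resid n K Y i l\<bar>) ` {1..K-1}) \<le> l1_weight \<alpha> l 0 * W n K"
      using resid_le_first_weight[OF n K sch _, of _ l] l K by (subst Max_le_iff) auto
  qed (use l1_weight_mono[OF alpha_pos alpha_lt_1] l1_weight_pos[OF alpha_pos alpha_lt_1] l in auto)
qed

lemma max_err_le_W_large_peclet:
  assumes n: "1 \<le> n" and K: "2 \<le> K" and sch: "is_scheme_solution \<alpha> lam v D T L r f g n K Y"
    and coarse: "2 * D < v * (L / real K)" and l: "l \<in> {1..n}"
  shows "Max ((\<lambda>i. \<bar>err n K Y i l\<bar>) ` {1..K-1}) \<le> sqrt (L * v / (2 * D)) * W n K"
proof -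
  interpret graded_mesh T r n using T_pos r_ge n by unfold_locales
  have h: "0 < L / real K" using L_pos K by simp
  have "real K * (2 * D) \<le> real K * (v * (L / real K))" using coarse K by (intro mult_left_mono) auto
  then have "real (card {1..K-1}) \<le> L * v / (2 * D)" using K D_pos by (simp add: field_simps)
  then have card: "sqrt (real (card {1..K-1})) \<le> sqrt (L * v / (2 * D))" by (rule real_sqrt_le_mono)
  have "L2_set (\<lambda>i. err n K Y i l) {1..K-1} \<le> sqrt (L * v / (2 * D)) * W n K"
  proof (rule l1_discrete_comparison[where b = "l1_weight \<alpha>" and n = n and l = l
        and E = "\<lambda>l. L2_set (\<lambda>i. err n K Y i l) {1..K-1}"
        and P = "\<lambda>l. L2_set (\<lambda>i. resid n K Y i l) {1..K-1}"])
    fix l assume l: "1 \<le> l" "l \<le> n"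
    show "l1_weight \<alpha> l (l - 1) * L2_set (\<lambda>i. err n K Y i l) {1..K-1}
        \<le> (\<Sum>j\<in>{1..<l}. (l1_weight \<alpha> l j - l1_weight \<alpha> l (j - 1)) * L2_set (\<lambda>i. err n K Y i j) {1..K-1})
          + L2_set (\<lambda>i. resid n K Y i l) {1..K-1}"
      using l1_weight_mono[OF alpha_pos alpha_lt_1] err_initial[OF sch] err_boundary[OF sch, of l] err_scheme_eq l K
      by (intro l2_norm_stability[OF K h D_pos l(1)]) auto
    have "L2_set (\<lambda>i. resid n K Y i l) {1..K-1} \<le> sqrt (real (card {1..K-1})) * (l1_weight \<alpha> l 0 * W n K)"
      using resid_le_first_weight[OF n K sch _, of _ l] l1_weight_pos[OF alpha_pos alpha_lt_1, of 0 l] W_nonneg l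
      by (intro L2_set_le_sqrt_card) auto
    also have "\<dots> \<le> sqrt (L * v / (2 * D)) * (l1_weight \<alpha> l 0 * W n K)"
      using card l1_weight_pos[OF alpha_pos alpha_lt_1, of 0 l] W_nonneg l by (intro mult_right_mono) auto
    finally show "L2_set (\<lambda>i. resid n K Y i l) {1..K-1} \<le> l1_weight \<alpha> l 0 * (sqrt (L * v / (2 * D)) * W n K)"
      by (simp add: ac_simps)
  qed (use l1_weight_mono[OF alpha_pos alpha_lt_1] l1_weight_pos[OF alpha_pos alpha_lt_1] l in auto)
  moreover have "Max ((\<lambda>i. \<bar>err n K Y i l\<bar>) ` {1..K-1}) \<le> L2_set (\<lambda>i. err n K Y i l) {1..K-1}"
    by (rule Max_abs_le_L2_set) (use K in auto)
  ultimately show ?thesis by linarith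
qed

definition "err_const = (1 + sqrt (L * v / (2 * D))) * (\<bar>Ct\<bar> + Gamma (1 - \<alpha>) * T powr \<alpha> * Cx) + 1"

lemma err_const_pos: "0 < err_const"
  unfolding err_const_def using Cx_nonneg alpha_lt_1 L_pos v_pos D_pos
  by (intro add_nonneg_pos mult_nonneg_nonneg add_nonneg_nonneg) auto

lemma max_err_bound:
  assumes n: "1 \<le> n" and K: "2 \<le> K" and sch: "is_scheme_solution \<alpha> lam v D T L r f g n K Y"
    and l: "l \<in> {1..n}"
  shows "Max ((\<lambda>i. \<bar>err n K Y i l\<bar>) ` {1..K-1})
         \<le> err_const * (real n powr (- min (2 - \<alpha>) (r * \<alpha>)) + (L / real K)^2)"
proof -
  define S where "S = sqrt (L * v / (2 * D))"
  have S: "0 \<le> S" unfolding S_def using L_pos v_pos D_pos by simp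
  have "W n K \<le> (1 + S) * W n K" "S * W n K \<le> (1 + S) * W n K"
    using W_nonneg S by (simp_all add: distrib_right)
  then have "Max ((\<lambda>i. \<bar>err n K Y i l\<bar>) ` {1..K-1}) \<le> (1 + S) * W n K"
    using max_err_le_W_small_peclet[OF n K sch _ l] max_err_le_W_large_peclet[OF n K sch _ l]
    unfolding S_def by (cases "v * (L / real K) \<le> 2 * D") auto
  also have "\<dots> \<le> (1 + S) * ((\<bar>Ct\<bar> + Gamma (1 - \<alpha>) * T powr \<alpha> * Cx) * (real n powr (- min (2 - \<alpha>) (r * \<alpha>)) + (L / real K)^2))"
    unfolding W_def using S Cx_nonneg alpha_lt_1 by (intro mult_left_mono) (auto simp: algebra_simps)
  also have "\<dots> \<le> err_const * (real n powr (- min (2 - \<alpha>) (r * \<alpha>)) + (L / real K)^2)"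
    unfolding err_const_def S_def[symmetric] by (simp add: algebra_simps)
  finally show ?thesis .
qed

end

theorem mainTheorem2:
  fixes \<alpha> lam v D T L r :: real
    and f :: "real \<Rightarrow> real \<Rightarrow> real" and g :: "real \<Rightarrow> real"
    and y yt ytt y1 y2 y3 y4 :: "real \<Rightarrow> real \<Rightarrow> real"
  assumes "0 < \<alpha>" "\<alpha> < 1" "0 \<le> lam" "0 < v" "0 < D" "0 < T" "0 < L" "1 \<le> r"
    and f_cont: "continuous_on ({0..L} \<times> {0..T}) (\<lambda>(x, t). f x t)"
    and g_cont: "continuous_on {0..L} g"
    and y_cont: "continuous_on ({0..L} \<times> {0..T}) (\<lambda>(x, t). y x t)"
    \<comment> \<open>time derivatives on (0,T]\<close>
    and y_t: "\<And>x t. x \<in> {0..L} \<Longrightarrow> t \<in> {0<..T} \<Longrightarrow>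
               ((\<lambda>s. y x s) has_real_derivative yt x t) (at t within {0..T})"
    and y_tt: "\<And>x t. x \<in> {0..L} \<Longrightarrow> t \<in> {0<..T} \<Longrightarrow>
               ((\<lambda>s. yt x s) has_real_derivative ytt x t) (at t within {0..T})"
    \<comment> \<open>continuous partial derivatives up to fourth order in x\<close>
    and y_x1: "\<And>x t. x \<in> {0..L} \<Longrightarrow> t \<in> {0..T} \<Longrightarrow>
               ((\<lambda>z. y z t) has_real_derivative y1 x t) (at x within {0..L})"
    and y_x2: "\<And>x t. x \<in> {0..L} \<Longrightarrow> t \<in> {0..T} \<Longrightarrow>
               ((\<lambda>z. y1 z t) has_real_derivative y2 x t) (at x within {0..L})"
    and y_x3: "\<And>x t. x \<in> {0..L} \<Longrightarrow> t \<in> {0..T} \<Longrightarrow>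
               ((\<lambda>z. y2 z t) has_real_derivative y3 x t) (at x within {0..L})"
    and y_x4: "\<And>x t. x \<in> {0..L} \<Longrightarrow> t \<in> {0..T} \<Longrightarrow>
               ((\<lambda>z. y3 z t) has_real_derivative y4 x t) (at x within {0..L})"
    and y_x_cont: "continuous_on ({0..L} \<times> {0..T}) (\<lambda>(x, t). y1 x t)"
                  "continuous_on ({0..L} \<times> {0..T}) (\<lambda>(x, t). y2 x t)"
                  "continuous_on ({0..L} \<times> {0..T}) (\<lambda>(x, t). y3 x t)"
                  "continuous_on ({0..L} \<times> {0..T}) (\<lambda>(x, t). y4 x t)"
    \<comment> \<open>regularity bounds in t\<close>
    and y_bounds: "\<exists>C>0. \<forall>x\<in>{0..L}. \<forall>t\<in>{0<..T}.
                     \<bar>y x t\<bar> \<le> C * (1 + t powr \<alpha>) \<and>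
                     \<bar>yt x t\<bar> \<le> C * (1 + t powr (\<alpha> - 1)) \<and>
                     \<bar>ytt x t\<bar> \<le> C * (1 + t powr (\<alpha> - 2))"
    \<comment> \<open>the fractional PDE\<close>
    and pde_int: "\<And>x t. x \<in> {0<..<L} \<Longrightarrow> t \<in> {0<..T} \<Longrightarrow>
               (\<lambda>s. (t - s) powr (-\<alpha>) * yt x s) integrable_on {0..t}"
    and pde: "\<And>x t. x \<in> {0<..<L} \<Longrightarrow> t \<in> {0<..T} \<Longrightarrow>
               caputo \<alpha> (\<lambda>s. yt x s) t = - v * y1 x t + D * y2 x t + exp (lam * t) * f x t"
    and init: "\<And>x. x \<in> {0..L} \<Longrightarrow> y x 0 = g x"
    and bdry: "\<And>t. t \<in> {0..T} \<Longrightarrow> y 0 t = 0 \<and> y L t = 0"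
  shows "\<exists>C>0. \<forall>n K Y. 1 \<le> n \<longrightarrow> 2 \<le> K \<longrightarrow>
           is_scheme_solution \<alpha> lam v D T L r f g n K Y \<longrightarrow>
           (\<forall>l\<in>{1..n}.
              Max ((\<lambda>i. \<bar>y (real i * (L / real K)) (tmesh T r n l) - Y i l\<bar>) ` {1..K-1})
              \<le> C * (real n powr (- min (2 - \<alpha>) (r * \<alpha>)) + (L / real K)^2))"
proof -
  obtain C0 where C0: "0 < C0"
    and bounds: "\<forall>x\<in>{0..L}. \<forall>t\<in>{0<..T}. \<bar>y x t\<bar> \<le> C0 * (1 + t powr \<alpha>) \<and>
                   \<bar>yt x t\<bar> \<le> C0 * (1 + t powr (\<alpha> - 1)) \<and> \<bar>ytt x t\<bar> \<le> C0 * (1 + t powr (\<alpha> - 2))"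
    using y_bounds by blast
  obtain M3 where "0 \<le> M3" "\<And>z. z \<in> {0..L} \<times> {0..T} \<Longrightarrow> norm ((\<lambda>(x, t). y3 x t) z) \<le> M3"
    using continuous_on_compact_bound[OF compact_Times[OF compact_Icc compact_Icc] y_x_cont(3)] by blast
  then have M3: "\<And>x t. x \<in> {0..L} \<Longrightarrow> t \<in> {0..T} \<Longrightarrow> \<bar>y3 x t\<bar> \<le> M3" by force
  obtain M4 where "0 \<le> M4" "\<And>z. z \<in> {0..L} \<times> {0..T} \<Longrightarrow> norm ((\<lambda>(x, t). y4 x t) z) \<le> M4"
    using continuous_on_compact_bound[OF compact_Times[OF compact_Icc compact_Icc] y_x_cont(4)] by blast
  then have M4: "\<And>x t. x \<in> {0..L} \<Longrightarrow> t \<in> {0..T} \<Longrightarrow> \<bar>y4 x t\<bar> \<le> M4" by force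
  interpret fde_solution \<alpha> lam v D T L r C0 M3 M4 f g y yt ytt y1 y2 y3 y4
    by unfold_locales (use assms C0 bounds M3 M4 in auto)
  show ?thesis
    using err_const_pos max_err_bound unfolding err_def by blast
qed

end
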